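(* Let $n\ge1$, $1\le k\le n$, $\ell\ge1$, $r:=n(n+1)/2$, $\Sigma\in\mathbb{S}^n$, and let $\tilde\varphi$ be the single-layer objective described in the context. Let $D>0$ and $$\mathcal{D}:=\{(A,b,C,d)\in\mathbb{R}^{\ell\times r}\times\mathbb{R}^\ell\times\mathbb{R}^{nk\times\ell}\times\mathbb{R}^{nk}: \|(A,b,C,d)\|\le D\}.$$ Then the function $\Theta=(A,b,C,d)\mapsto\nabla\tilde\varphi(\Theta)$ is Lipschitz continuous on $\mathcal{D}$ with Lipschitz constant $L_{\tilde\varphi}$ satisfying $$L_{\tilde\varphi}^2=\mathcal{C}_{\tilde\varphi}\,n^2\ell\max\{D^4L_Z^4,\ \ell D^8L_Z^4,\ \ell^2D^6L_Z^2,\ nD^2L_Z^2,\ nk\ell,\ \ell^3D^4\},$$ where $L_Z:=\sqrt{1+\|\Sigma\|_S^2}$ and $\mathcal{C}_{\tilde\varphi}$ is a constant that only depends polynomially on $\sigma'_{\max}$, $\sigma''_{\max}$, and $\mu''_{\max}$.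
   Context: $\mathbb{S}^n$ denotes the real symmetric $n\times n$ matrices. $h:\mathbb{S}^n\to\mathbb{R}^{n(n+1)/2}$, $h(\Sigma)=(\Sigma_{1,1},\dots,\Sigma_{1,n},\Sigma_{2,2},\dots,\Sigma_{2,n},\dots,\Sigma_{n,n})^T$, and $\|\Sigma\|_S:=\|h(\Sigma)\|$ (Euclidean norm). $g:\mathbb{R}^{nk}\to\mathbb{R}^{n\times k}$ maps $v$ to $W$ with $W_{i,j}=v_{(i-1)k+j}$. The activation $\sigma:\mathbb{R}\to[-1,1]$ is twice differentiable with $|\sigma'|\le\sigma'_{\max}$ ($\sigma'_{\max}>0$) and $|\sigma''|\le\sigma''_{\max}$; $\tilde\sigma(u):=(\sigma(u_1),\dots,\sigma(u_\ell))^T$. $\mu:\mathbb{R}\to\mathbb{R}$ is smooth with $|\mu'|\le1$, $|\mu''|\le\mu''_{\max}$. For $\Theta=(A,b,C,d)$ with $A\in\mathbb{R}^{\ell\times r}$, $b\in\mathbb{R}^\ell$, $C\in\mathbb{R}^{nk\times\ell}$, $d\in\mathbb{R}^{nk}$, the single-layer network is $\mathcal{N}^\Theta(x):=C\tilde\sigma(Ax+b)+d$, and with $M_\Theta:=g(\mathcal{N}^\Theta(h(\Sigma)))$, $\tilde\varphi(\Theta):=\sum_{i,j=1}^n\mu\big([M_\Theta M_\Theta^T-\Sigma]_{i,j}\big)$. The norm of a list of matrices is $\|(X^1,\dots,X^\gamma)\|:=(\sum_i\|X^i\|_F^2)^{1/2}$; Lipschitz continuity is with respect to this norm. *)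

theory Defs
  imports "HOL-Analysis.Analysis"
begin

text \<open>Conventions: all indices are 0-based (paper index i corresponds to i-1 here).
  Matrices are functions nat => nat => real, vectors nat => real; only entries with
  indices inside the stated dimensions are ever used.\<close>

type_synonym params =
  "(nat \<Rightarrow> nat \<Rightarrow> real) \<times> (nat \<Rightarrow> real) \<times> (nat \<Rightarrow> nat \<Rightarrow> real) \<times> (nat \<Rightarrow> real)"

definition r_dim :: "nat \<Rightarrow> nat" where
  "r_dim n = n * (n + 1) div 2"

definition hvec :: "nat \<Rightarrow> (nat \<Rightarrow> nat \<Rightarrow> real) \<Rightarrow> real list" where
  "hvec n S = concat (map (\<lambda>i. map (\<lambda>j. S i j) [i..<n]) [0..<n])"

definition norm_S :: "nat \<Rightarrow> (nat \<Rightarrow> nat \<Rightarrow> real) \<Rightarrow> real" where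
  "norm_S n S = sqrt (sum_list (map (\<lambda>x. x\<^sup>2) (hvec n S)))"

definition gmat :: "nat \<Rightarrow> (nat \<Rightarrow> real) \<Rightarrow> nat \<Rightarrow> nat \<Rightarrow> real" where
  "gmat k v i j = v (i * k + j)"

definition net :: "(real \<Rightarrow> real) \<Rightarrow> nat \<Rightarrow> nat \<Rightarrow> (nat \<Rightarrow> nat \<Rightarrow> real) \<Rightarrow> params \<Rightarrow> nat \<Rightarrow> real" where
  "net \<sigma> n l S \<Theta> t = (case \<Theta> of (A, b, C, d) \<Rightarrow>
     (\<Sum>a<l. C t a * \<sigma> ((\<Sum>p<r_dim n. A a p * (hvec n S ! p)) + b a)) + d t)"

definition phi_tilde :: "(real \<Rightarrow> real) \<Rightarrow> (real \<Rightarrow> real) \<Rightarrow> nat \<Rightarrow> nat \<Rightarrow> nat \<Rightarrow>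
    (nat \<Rightarrow> nat \<Rightarrow> real) \<Rightarrow> params \<Rightarrow> real" where
  "phi_tilde \<sigma> \<mu> n k l S \<Theta> =
     (let M = gmat k (net \<sigma> n l S \<Theta>) in
      \<Sum>i<n. \<Sum>j<n. \<mu> ((\<Sum>q<k. M i q * M j q) - S i j))"

definition pnorm :: "nat \<Rightarrow> nat \<Rightarrow> nat \<Rightarrow> params \<Rightarrow> real" where
  "pnorm n k l \<Theta> = (case \<Theta> of (A, b, C, d) \<Rightarrow>
     sqrt ((\<Sum>a<l. \<Sum>p<r_dim n. (A a p)\<^sup>2) + (\<Sum>a<l. (b a)\<^sup>2)
         + (\<Sum>t<n*k. \<Sum>a<l. (C t a)\<^sup>2) + (\<Sum>t<n*k. (d t)\<^sup>2)))"

definition pinner :: "nat \<Rightarrow> nat \<Rightarrow> nat \<Rightarrow> params \<Rightarrow> params \<Rightarrow> real" where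
  "pinner n k l \<Theta> \<Theta>' = (case \<Theta> of (A, b, C, d) \<Rightarrow> case \<Theta>' of (A', b', C', d') \<Rightarrow>
     (\<Sum>a<l. \<Sum>p<r_dim n. A a p * A' a p) + (\<Sum>a<l. b a * b' a)
   + (\<Sum>t<n*k. \<Sum>a<l. C t a * C' t a) + (\<Sum>t<n*k. d t * d' t))"

definition padd :: "params \<Rightarrow> params \<Rightarrow> params" where
  "padd \<Theta> \<Theta>' = (case \<Theta> of (A, b, C, d) \<Rightarrow> case \<Theta>' of (A', b', C', d') \<Rightarrow>
     (\<lambda>i j. A i j + A' i j, \<lambda>i. b i + b' i, \<lambda>i j. C i j + C' i j, \<lambda>i. d i + d' i))"

definition psub :: "params \<Rightarrow> params \<Rightarrow> params" where
  "psub \<Theta> \<Theta>' = (case \<Theta> of (A, b, C, d) \<Rightarrow> case \<Theta>' of (A', b', C', d') \<Rightarrow>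
     (\<lambda>i j. A i j - A' i j, \<lambda>i. b i - b' i, \<lambda>i j. C i j - C' i j, \<lambda>i. d i - d' i))"

definition has_pgrad :: "nat \<Rightarrow> nat \<Rightarrow> nat \<Rightarrow> (params \<Rightarrow> real) \<Rightarrow> params \<Rightarrow> params \<Rightarrow> bool" where
  "has_pgrad n k l f \<Theta> G \<longleftrightarrow>
     (\<forall>\<epsilon>>0. \<exists>\<delta>>0. \<forall>\<Delta>. pnorm n k l \<Delta> < \<delta> \<longrightarrow>
        \<bar>f (padd \<Theta> \<Delta>) - f \<Theta> - pinner n k l G \<Delta>\<bar> \<le> \<epsilon> * pnorm n k l \<Delta>)"

definition poly3 :: "(nat \<Rightarrow> nat \<Rightarrow> nat \<Rightarrow> real) \<Rightarrow> nat \<Rightarrow> real \<Rightarrow> real \<Rightarrow> real \<Rightarrow> real" where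
  "poly3 c N x y z = (\<Sum>i\<le>N. \<Sum>j\<le>N. \<Sum>m\<le>N. c i j m * x ^ i * y ^ j * z ^ m)"

end

(*
  The gradient of the objective is computed by the chain rule along lines Theta + tau Delta.  This
  candidate is Lipschitz on balls, so the mean value theorem shows that it is the (Frechet) gradient,
  which is unique.

  For the Lipschitz bound, every quantity of backpropagation (the pre-activations A x + b, the network
  output N, the residual R = M M^T - Sigma, the weights mu'(R) + mu'(R)^T, the gradients with respect to
  M and to the activations) is a matrix product of earlier ones.  Squared Frobenius distances therefore
  propagate through |P Q - P' Q'|^2 <= 2 |P - P'|^2 |Q|^2 + 2 |P'|^2 |Q - Q'|^2, using |sigma| <= 1,
  |sigma'| <= s1, |mu'| <= 1 and the Lipschitz constants s2 of sigma' and m2 of mu'.  On the ball of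
  radius D every factor is bounded by a monomial in D, L_Z, n and l, and each monomial of the final
  bound is dominated by n^2 l times the maximum in the statement.
*)

theory Submission
  imports Defs
begin

section \<open>Inequalities for sums of squares\<close>

lemma square_add_le: "((a::real) + b)\<^sup>2 \<le> 2 * a\<^sup>2 + 2 * b\<^sup>2"
proof -
  have "0 \<le> (a - b)\<^sup>2" by simp
  then show ?thesis by (simp add: power2_eq_square algebra_simps)
qed

lemma square_add3_le: "((a::real) + b + c)\<^sup>2 \<le> 3 * a\<^sup>2 + 3 * b\<^sup>2 + 3 * c\<^sup>2"
proof -
  have "0 \<le> (a - b)\<^sup>2 + (b - c)\<^sup>2 + (a - c)\<^sup>2" by simp
  then show ?thesis by (simp add: power2_eq_square algebra_simps)
qed

lemma le_mult_of_one_le: "1 \<le> y \<Longrightarrow> 0 \<le> (x::real) \<Longrightarrow> x \<le> y * x"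
  using mult_right_mono[of 1 y x] by simp

lemma square_diff_le_of_deriv_bound:
  assumes "\<And>x. (f has_real_derivative f' x) (at x)" and "\<And>x. \<bar>f' x\<bar> \<le> B"
  shows "(f x - f y)\<^sup>2 \<le> B\<^sup>2 * (x - y)\<^sup>2"
proof -
  have "\<bar>f x - f y\<bar> \<le> B * \<bar>x - y\<bar>"
    using field_differentiable_bound[OF convex_UNIV, of f f' B x y] assms
    by (simp add: has_field_derivative_at_within)
  from power_mono[OF this abs_ge_zero, of 2] show ?thesis
    by (simp add: power_mult_distrib)
qed

lemma sum_sq_matrix_mult_le:
  fixes P :: "'i \<Rightarrow> 'j \<Rightarrow> real" and Q :: "'j \<Rightarrow> 'q \<Rightarrow> real"
  shows "(\<Sum>i\<in>I. \<Sum>q\<in>K. (\<Sum>j\<in>J. P i j * Q j q)\<^sup>2)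
    \<le> (\<Sum>i\<in>I. \<Sum>j\<in>J. (P i j)\<^sup>2) * (\<Sum>j\<in>J. \<Sum>q\<in>K. (Q j q)\<^sup>2)"
proof -
  have "(\<Sum>i\<in>I. \<Sum>q\<in>K. (\<Sum>j\<in>J. P i j * Q j q)\<^sup>2)
      \<le> (\<Sum>i\<in>I. \<Sum>q\<in>K. (\<Sum>j\<in>J. (P i j)\<^sup>2) * (\<Sum>j\<in>J. (Q j q)\<^sup>2))"
    by (intro sum_mono Cauchy_Schwarz_ineq_sum)
  also have "\<dots> = (\<Sum>i\<in>I. (\<Sum>j\<in>J. (P i j)\<^sup>2) * (\<Sum>q\<in>K. \<Sum>j\<in>J. (Q j q)\<^sup>2))"
    by (simp add: sum_distrib_left)
  also have "\<dots> = (\<Sum>i\<in>I. \<Sum>j\<in>J. (P i j)\<^sup>2) * (\<Sum>j\<in>J. \<Sum>q\<in>K. (Q j q)\<^sup>2)"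
    by (simp only: sum.swap[of _ K J] sum_distrib_right)
  finally show ?thesis .
qed

lemma sum_sq_matrix_mult_diff_le:
  fixes P P' :: "'i \<Rightarrow> 'j \<Rightarrow> real" and Q Q' :: "'j \<Rightarrow> 'q \<Rightarrow> real"
  shows "(\<Sum>i\<in>I. \<Sum>q\<in>K. ((\<Sum>j\<in>J. P i j * Q j q) - (\<Sum>j\<in>J. P' i j * Q' j q))\<^sup>2)
    \<le> 2 * ((\<Sum>i\<in>I. \<Sum>j\<in>J. (P i j - P' i j)\<^sup>2) * (\<Sum>j\<in>J. \<Sum>q\<in>K. (Q j q)\<^sup>2))
      + 2 * ((\<Sum>i\<in>I. \<Sum>j\<in>J. (P' i j)\<^sup>2) * (\<Sum>j\<in>J. \<Sum>q\<in>K. (Q j q - Q' j q)\<^sup>2))"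
proof -
  have "(\<Sum>j\<in>J. P i j * Q j q) - (\<Sum>j\<in>J. P' i j * Q' j q)
      = (\<Sum>j\<in>J. (P i j - P' i j) * Q j q) + (\<Sum>j\<in>J. P' i j * (Q j q - Q' j q))" for i q
    by (simp add: sum_subtractf[symmetric] sum.distrib[symmetric] algebra_simps)
  then have "(\<Sum>i\<in>I. \<Sum>q\<in>K. ((\<Sum>j\<in>J. P i j * Q j q) - (\<Sum>j\<in>J. P' i j * Q' j q))\<^sup>2)
      \<le> (\<Sum>i\<in>I. \<Sum>q\<in>K. 2 * (\<Sum>j\<in>J. (P i j - P' i j) * Q j q)\<^sup>2
                         + 2 * (\<Sum>j\<in>J. P' i j * (Q j q - Q' j q))\<^sup>2)"
    by (simp only:) (intro sum_mono square_add_le)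
  also have "\<dots> = 2 * (\<Sum>i\<in>I. \<Sum>q\<in>K. (\<Sum>j\<in>J. (P i j - P' i j) * Q j q)\<^sup>2)
       + 2 * (\<Sum>i\<in>I. \<Sum>q\<in>K. (\<Sum>j\<in>J. P' i j * (Q j q - Q' j q))\<^sup>2)"
    by (simp add: sum.distrib sum_distrib_left)
  finally show ?thesis
    using sum_sq_matrix_mult_le[where P = "\<lambda>i j. P i j - P' i j" and Q = Q and I = I and J = J and K = K]
      sum_sq_matrix_mult_le[where P = P' and Q = "\<lambda>j q. Q j q - Q' j q" and I = I and J = J and K = K]
    by linarith
qed

lemma sum_sq_outer_diff_le:
  fixes \<alpha> \<alpha>' :: "'i \<Rightarrow> real" and \<beta> \<beta>' :: "'j \<Rightarrow> real"
  shows "(\<Sum>i\<in>I. \<Sum>j\<in>J. (\<alpha> i * \<beta> j - \<alpha>' i * \<beta>' j)\<^sup>2)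
    \<le> 2 * ((\<Sum>i\<in>I. (\<alpha> i - \<alpha>' i)\<^sup>2) * (\<Sum>j\<in>J. (\<beta> j)\<^sup>2))
      + 2 * ((\<Sum>i\<in>I. (\<alpha>' i)\<^sup>2) * (\<Sum>j\<in>J. (\<beta> j - \<beta>' j)\<^sup>2))"
proof -
  have "\<alpha> i * \<beta> j - \<alpha>' i * \<beta>' j = (\<alpha> i - \<alpha>' i) * \<beta> j + \<alpha>' i * (\<beta> j - \<beta>' j)" for i j
    by (simp add: algebra_simps)
  then have "(\<Sum>i\<in>I. \<Sum>j\<in>J. (\<alpha> i * \<beta> j - \<alpha>' i * \<beta>' j)\<^sup>2)
      \<le> (\<Sum>i\<in>I. \<Sum>j\<in>J. 2 * ((\<alpha> i - \<alpha>' i)\<^sup>2 * (\<beta> j)\<^sup>2) + 2 * ((\<alpha>' i)\<^sup>2 * (\<beta> j - \<beta>' j)\<^sup>2))"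
    by (simp only: power_mult_distrib[symmetric]) (intro sum_mono square_add_le)
  also have "\<dots> = 2 * ((\<Sum>i\<in>I. (\<alpha> i - \<alpha>' i)\<^sup>2) * (\<Sum>j\<in>J. (\<beta> j)\<^sup>2))
      + 2 * ((\<Sum>i\<in>I. (\<alpha>' i)\<^sup>2) * (\<Sum>j\<in>J. (\<beta> j - \<beta>' j)\<^sup>2))"
  proof -
    have "(\<Sum>i\<in>I. \<Sum>j\<in>J. 2 * (f i * g j)) = 2 * (sum f I * sum g J)"
      for f :: "'i \<Rightarrow> real" and g :: "'j \<Rightarrow> real"
      unfolding sum_product by (simp only: sum_distrib_left)
    then show ?thesis by (simp only: sum.distrib)
  qed
  finally show ?thesis .
qed

lemma sum_sq_symmetrize_diff_le:
  fixes w w' :: "'i \<Rightarrow> 'i \<Rightarrow> real"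
  shows "(\<Sum>i\<in>I. \<Sum>j\<in>I. ((w i j + w j i) - (w' i j + w' j i))\<^sup>2) \<le> 4 * (\<Sum>i\<in>I. \<Sum>j\<in>I. (w i j - w' i j)\<^sup>2)"
proof -
  have "(\<Sum>i\<in>I. \<Sum>j\<in>I. ((w i j + w j i) - (w' i j + w' j i))\<^sup>2)
      \<le> (\<Sum>i\<in>I. \<Sum>j\<in>I. 2 * (w i j - w' i j)\<^sup>2 + 2 * (w j i - w' j i)\<^sup>2)"
    by (intro sum_mono) (metis square_add_le add_diff_add)
  also have "\<dots> = 2 * (\<Sum>i\<in>I. \<Sum>j\<in>I. (w i j - w' i j)\<^sup>2) + 2 * (\<Sum>i\<in>I. \<Sum>j\<in>I. (w j i - w' j i)\<^sup>2)"
    by (simp add: sum.distrib sum_distrib_left)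
  also have "(\<Sum>i\<in>I. \<Sum>j\<in>I. (w j i - w' j i)\<^sup>2) = (\<Sum>i\<in>I. \<Sum>j\<in>I. (w i j - w' i j)\<^sup>2)"
    by (rule sum.swap)
  finally show ?thesis by simp
qed

lemma sum_lessThan_mult_div_mod:
  fixes n k :: nat
  shows "(\<Sum>t<n * k. g (t div k) (t mod k)) = (\<Sum>i<n. \<Sum>q<k. g i q)"
proof -
  have "(\<Sum>t<n * k. g (t div k) (t mod k)) = (\<Sum>(i, q)\<in>{..<n} \<times> {..<k}. g i q)"
  proof (rule sum.reindex_bij_witness[where i = "\<lambda>(i, q). i * k + q" and j = "\<lambda>t. (t div k, t mod k)"])
    fix iq assume "iq \<in> {..<n} \<times> {..<k}"
    then obtain i q where iq: "iq = (i, q)" "i < n" "q < k" by blast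
    have "i * k + q < Suc i * k" using iq by simp
    also have "\<dots> \<le> n * k" using iq by (intro mult_right_mono) auto
    finally show "(case iq of (i, q) \<Rightarrow> i * k + q) \<in> {..<n * k}" using iq by simp
  next
    fix t assume "t \<in> {..<n * k}"
    then have "0 < k" by (auto intro: gr0I)
    then show "(t div k, t mod k) \<in> {..<n} \<times> {..<k}"
      using \<open>t \<in> {..<n * k}\<close> by (simp add: less_mult_imp_div_less)
  qed auto
  then show ?thesis by (simp add: sum.cartesian_product)
qed

lemma sum_lessThan_mult:
  fixes n k :: nat
  shows "(\<Sum>t<n * k. f t) = (\<Sum>i<n. \<Sum>q<k. f (i * k + q))"
  using sum_lessThan_mult_div_mod[where g = "\<lambda>i q. f (i * k + q)" and n = n and k = k]
  by simp

section \<open>The parameter space\<close>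

definition pscale :: "real \<Rightarrow> params \<Rightarrow> params" where
  "pscale c \<Theta> = (case \<Theta> of (A, b, C, d) \<Rightarrow>
     (\<lambda>i j. c * A i j, \<lambda>i. c * b i, \<lambda>i j. c * C i j, \<lambda>i. c * d i))"

lemma padd_pscale_one [simp]: "padd \<Theta> (pscale 1 \<Delta>) = padd \<Theta> \<Delta>"
  by (cases \<Theta>; cases \<Delta>) (simp add: padd_def pscale_def)

lemma padd_pscale_zero [simp]: "padd \<Theta> (pscale 0 \<Delta>) = \<Theta>"
  by (cases \<Theta>; cases \<Delta>) (simp add: padd_def pscale_def)

lemma psub_padd_cancel_left [simp]: "psub (padd \<Theta> \<Delta>) \<Theta> = \<Delta>"
  by (cases \<Theta>; cases \<Delta>) (simp add: padd_def psub_def)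

text \<open>Flattening a parameter tuple to a real function on a finite index set turns \<open>pnorm\<close> and
  \<open>pinner\<close> into \<open>L2_set\<close> and the standard inner product.\<close>

type_synonym pindex = "(nat \<times> nat) + nat + (nat \<times> nat) + nat"

definition pcoord :: "params \<Rightarrow> pindex \<Rightarrow> real" where
  "pcoord \<Theta> = (case \<Theta> of (A, b, C, d) \<Rightarrow>
     case_sum (case_prod A) (case_sum b (case_sum (case_prod C) d)))"

definition pindices :: "nat \<Rightarrow> nat \<Rightarrow> nat \<Rightarrow> pindex set" where
  "pindices n k l = ({..<l} \<times> {..<r_dim n}) <+> {..<l} <+> ({..<n * k} \<times> {..<l}) <+> {..<n * k}"

lemma sum_pindices:
  "(\<Sum>i\<in>pindices n k l. g i) =
     (\<Sum>a<l. \<Sum>p<r_dim n. g (Inl (a, p))) + (\<Sum>a<l. g (Inr (Inl a)))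
     + (\<Sum>t<n * k. \<Sum>a<l. g (Inr (Inr (Inl (t, a))))) + (\<Sum>t<n * k. g (Inr (Inr (Inr t))))"
  by (simp add: pindices_def sum.Plus sum.cartesian_product case_prod_beta add.assoc)

lemma pinner_eq_sum: "pinner n k l \<Theta> \<Theta>' = (\<Sum>i\<in>pindices n k l. pcoord \<Theta> i * pcoord \<Theta>' i)"
  by (simp add: sum_pindices pinner_def pcoord_def split: prod.splits)

lemma pnorm_eq_L2_set: "pnorm n k l \<Theta> = L2_set (pcoord \<Theta>) (pindices n k l)"
  by (simp add: L2_set_def sum_pindices pnorm_def pcoord_def split: prod.splits)

lemma pcoord_padd [simp]: "pcoord (padd \<Theta> \<Theta>') = (\<lambda>i. pcoord \<Theta> i + pcoord \<Theta>' i)"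
  by (simp add: pcoord_def padd_def fun_eq_iff split: prod.splits sum.splits)

lemma pcoord_psub [simp]: "pcoord (psub \<Theta> \<Theta>') = (\<lambda>i. pcoord \<Theta> i - pcoord \<Theta>' i)"
  by (simp add: pcoord_def psub_def fun_eq_iff split: prod.splits sum.splits)

lemma pcoord_pscale [simp]: "pcoord (pscale c \<Theta>) = (\<lambda>i. c * pcoord \<Theta> i)"
  by (simp add: pcoord_def pscale_def fun_eq_iff split: prod.splits sum.splits)

lemma pnorm_nonneg: "0 \<le> pnorm n k l \<Theta>"
  by (simp add: pnorm_eq_L2_set)

lemma pnorm_sq_le: "pnorm n k l \<Theta> \<le> D \<Longrightarrow> (pnorm n k l \<Theta>)\<^sup>2 \<le> D\<^sup>2"
  using power_mono[OF _ pnorm_nonneg] by blast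

lemma abs_pinner_le: "\<bar>pinner n k l \<Theta> \<Theta>'\<bar> \<le> pnorm n k l \<Theta> * pnorm n k l \<Theta>'"
  unfolding pinner_eq_sum pnorm_eq_L2_set
  by (rule order_trans[OF sum_abs]) (simp add: abs_mult L2_set_mult_ineq)

lemma pnorm_padd_le: "pnorm n k l (padd \<Theta> \<Theta>') \<le> pnorm n k l \<Theta> + pnorm n k l \<Theta>'"
  by (simp add: pnorm_eq_L2_set L2_set_triangle_ineq)

lemma pnorm_pscale: "pnorm n k l (pscale c \<Theta>) = \<bar>c\<bar> * pnorm n k l \<Theta>"
  by (simp add: pnorm_eq_L2_set L2_set_def power_mult_distrib real_sqrt_mult
      flip: sum_distrib_left)

lemma pinner_psub_left: "pinner n k l (psub \<Theta> \<Theta>') \<Psi> = pinner n k l \<Theta> \<Psi> - pinner n k l \<Theta>' \<Psi>"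
  by (simp add: pinner_eq_sum left_diff_distrib sum_subtractf)

lemma pinner_pscale_self: "pinner n k l \<Theta> (pscale c \<Theta>) = c * (pnorm n k l \<Theta>)\<^sup>2"
  by (simp add: pinner_eq_sum pnorm_eq_L2_set L2_set_def sum_nonneg sum_distrib_left
      power2_eq_square mult_ac)

lemma has_pgrad_unique:
  assumes "has_pgrad n k l f \<Theta> G" and "has_pgrad n k l f \<Theta> G'"
  shows "pnorm n k l (psub G G') = 0"
proof (rule ccontr)
  define H where "H = psub G G'"
  define p where "p = pnorm n k l H"
  assume "pnorm n k l (psub G G') \<noteq> 0"
  then have p: "p > 0" using pnorm_nonneg[of n k l H] by (simp add: p_def H_def)
  obtain r where r: "r > 0" "\<And>\<Delta>. pnorm n k l \<Delta> < r \<Longrightarrow>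
      \<bar>f (padd \<Theta> \<Delta>) - f \<Theta> - pinner n k l G \<Delta>\<bar> \<le> p / 4 * pnorm n k l \<Delta>"
    using assms(1) p unfolding has_pgrad_def by (meson divide_pos_pos zero_less_numeral)
  obtain r' where r': "r' > 0" "\<And>\<Delta>. pnorm n k l \<Delta> < r' \<Longrightarrow>
      \<bar>f (padd \<Theta> \<Delta>) - f \<Theta> - pinner n k l G' \<Delta>\<bar> \<le> p / 4 * pnorm n k l \<Delta>"
    using assms(2) p unfolding has_pgrad_def by (meson divide_pos_pos zero_less_numeral)
  define t where "t = min r r' / (2 * p)"
  define \<Delta> where "\<Delta> = pscale t H"
  have t: "t > 0" using r r' p by (simp add: t_def)
  have norm_\<Delta>: "pnorm n k l \<Delta> = t * p"
    using t by (simp add: \<Delta>_def pnorm_pscale p_def)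
  then have "pnorm n k l \<Delta> < r" "pnorm n k l \<Delta> < r'"
    using p r r' by (auto simp: t_def)
  from r(2)[OF this(1)] r'(2)[OF this(2)]
  have "\<bar>pinner n k l G \<Delta> - pinner n k l G' \<Delta>\<bar> \<le> p / 4 * pnorm n k l \<Delta> + p / 4 * pnorm n k l \<Delta>"
    by linarith
  moreover have "pinner n k l G \<Delta> - pinner n k l G' \<Delta> = t * p\<^sup>2"
    by (simp add: \<Delta>_def H_def p_def pinner_psub_left[symmetric] pinner_pscale_self)
  ultimately show False
    using norm_\<Delta> t p by (simp add: power2_eq_square)
qed

lemma pnorm_psub_has_pgrad_cong:
  assumes "has_pgrad n k l f \<Theta> G" "has_pgrad n k l f \<Theta> G\<^sub>0"
    and "has_pgrad n k l f \<Theta>' G'" "has_pgrad n k l f \<Theta>' G\<^sub>0'"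
  shows "pnorm n k l (psub G G') = pnorm n k l (psub G\<^sub>0 G\<^sub>0')"
proof -
  have fin: "finite (pindices n k l)" by (simp add: pindices_def)
  have "\<forall>i\<in>pindices n k l. pcoord G i = pcoord G\<^sub>0 i" "\<forall>i\<in>pindices n k l. pcoord G' i = pcoord G\<^sub>0' i"
    using has_pgrad_unique[OF assms(1,2)] has_pgrad_unique[OF assms(3,4)]
    by (simp_all add: pnorm_eq_L2_set L2_set_eq_0_iff[OF fin])
  then show ?thesis
    by (simp add: pnorm_eq_L2_set cong: L2_set_cong)
qed

text \<open>A map \<open>G\<close> that is Lipschitz near \<open>\<Theta>\<close> and gives the derivatives of \<open>f\<close> along all lines
  is the gradient of \<open>f\<close> at \<open>\<Theta>\<close>: by the mean value theorem the first-order remainder is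
  \<open>\<langle>G(\<Theta> + \<xi>\<Delta>) - G \<Theta>, \<Delta>\<rangle> = O(\<parallel>\<Delta>\<parallel>\<^sup>2)\<close>.\<close>

context
  fixes n k l :: nat and f :: "params \<Rightarrow> real" and G :: "params \<Rightarrow> params" and \<Theta> :: params
    and R L :: real
  assumes deriv: "\<And>\<Delta> \<tau>. ((\<lambda>\<tau>. f (padd \<Theta> (pscale \<tau> \<Delta>))) has_real_derivative
                   pinner n k l (G (padd \<Theta> (pscale \<tau> \<Delta>))) \<Delta>) (at \<tau>)"
    and lip: "\<And>\<Theta>\<^sub>1 \<Theta>\<^sub>2. pnorm n k l \<Theta>\<^sub>1 \<le> R \<Longrightarrow> pnorm n k l \<Theta>\<^sub>2 \<le> R \<Longrightarrow>
                pnorm n k l (psub (G \<Theta>\<^sub>1) (G \<Theta>\<^sub>2)) \<le> L * pnorm n k l (psub \<Theta>\<^sub>1 \<Theta>\<^sub>2)"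
    and R: "pnorm n k l \<Theta> + 1 \<le> R" and L: "0 \<le> L"
begin

lemma line_remainder_le:
  assumes \<Delta>: "pnorm n k l \<Delta> \<le> 1"
  shows "\<bar>f (padd \<Theta> \<Delta>) - f \<Theta> - pinner n k l (G \<Theta>) \<Delta>\<bar> \<le> L * (pnorm n k l \<Delta>)\<^sup>2"
proof -
  obtain \<xi> :: real where \<xi>: "0 < \<xi>" "\<xi> < 1"
    and mvt: "f (padd \<Theta> \<Delta>) - f \<Theta> = pinner n k l (G (padd \<Theta> (pscale \<xi> \<Delta>))) \<Delta>"
    using MVT2[of 0 1 "\<lambda>\<tau>. f (padd \<Theta> (pscale \<tau> \<Delta>))"] deriv[of \<Delta>] by force
  define \<Theta>\<^sub>\<xi> where "\<Theta>\<^sub>\<xi> = padd \<Theta> (pscale \<xi> \<Delta>)"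
  have step: "pnorm n k l (psub \<Theta>\<^sub>\<xi> \<Theta>) \<le> pnorm n k l \<Delta>"
    using \<xi> pnorm_nonneg[of n k l \<Delta>] by (simp add: \<Theta>\<^sub>\<xi>_def pnorm_pscale mult_left_le_one_le)
  have "pnorm n k l \<Theta>\<^sub>\<xi> \<le> pnorm n k l \<Theta> + pnorm n k l (psub \<Theta>\<^sub>\<xi> \<Theta>)"
    using pnorm_padd_le[of n k l \<Theta> "pscale \<xi> \<Delta>"] by (simp add: \<Theta>\<^sub>\<xi>_def)
  then have "pnorm n k l \<Theta>\<^sub>\<xi> \<le> R" using R step \<Delta> by linarith
  then have "pnorm n k l (psub (G \<Theta>\<^sub>\<xi>) (G \<Theta>)) \<le> L * pnorm n k l \<Delta>"
    using lip[of \<Theta>\<^sub>\<xi> \<Theta>] R pnorm_nonneg[of n k l \<Theta>] mult_left_mono[OF step L] by linarith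
  then have "\<bar>pinner n k l (psub (G \<Theta>\<^sub>\<xi>) (G \<Theta>)) \<Delta>\<bar> \<le> L * pnorm n k l \<Delta> * pnorm n k l \<Delta>"
    using abs_pinner_le[of n k l "psub (G \<Theta>\<^sub>\<xi>) (G \<Theta>)" \<Delta>]
    by (meson order_trans mult_right_mono pnorm_nonneg)
  then show ?thesis
    by (simp add: mvt pinner_psub_left \<Theta>\<^sub>\<xi>_def power2_eq_square mult.assoc)
qed

lemma has_pgrad_of_line_derivative: "has_pgrad n k l f \<Theta> (G \<Theta>)"
  unfolding has_pgrad_def
proof (intro allI impI)
  fix \<epsilon> :: real assume \<epsilon>: "\<epsilon> > 0"
  define r where "r = min 1 (\<epsilon> / (L + 1))"
  have r: "r > 0" "r \<le> 1" "L * r \<le> \<epsilon>"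
    using \<epsilon> L by (auto simp: r_def min_def field_simps)
  have "\<bar>f (padd \<Theta> \<Delta>) - f \<Theta> - pinner n k l (G \<Theta>) \<Delta>\<bar> \<le> \<epsilon> * pnorm n k l \<Delta>"
    if \<Delta>: "pnorm n k l \<Delta> < r" for \<Delta>
  proof -
    have "\<bar>f (padd \<Theta> \<Delta>) - f \<Theta> - pinner n k l (G \<Theta>) \<Delta>\<bar> \<le> L * pnorm n k l \<Delta> * pnorm n k l \<Delta>"
      using line_remainder_le \<Delta> r by (simp add: power2_eq_square mult.assoc)
    also have "\<dots> \<le> \<epsilon> * pnorm n k l \<Delta>"
      using \<Delta> r(3) L pnorm_nonneg[of n k l \<Delta>]
      by (intro mult_right_mono) (auto intro: order_trans[OF mult_left_mono[of _ r L]])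
    finally show ?thesis .
  qed
  with r(1) show "\<exists>\<delta>>0. \<forall>\<Delta>. pnorm n k l \<Delta> < \<delta> \<longrightarrow>
      \<bar>f (padd \<Theta> \<Delta>) - f \<Theta> - pinner n k l (G \<Theta>) \<Delta>\<bar> \<le> \<epsilon> * pnorm n k l \<Delta>"
    by blast
qed

end

section \<open>The gradient of the objective\<close>

definition pA :: "params \<Rightarrow> nat \<Rightarrow> nat \<Rightarrow> real" where "pA \<Theta> = fst \<Theta>"
definition pb :: "params \<Rightarrow> nat \<Rightarrow> real" where "pb \<Theta> = fst (snd \<Theta>)"
definition pC :: "params \<Rightarrow> nat \<Rightarrow> nat \<Rightarrow> real" where "pC \<Theta> = fst (snd (snd \<Theta>))"
definition pd :: "params \<Rightarrow> nat \<Rightarrow> real" where "pd \<Theta> = snd (snd (snd \<Theta>))"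

lemma params_components [simp]:
  "pA (A, b, C, d) = A" "pb (A, b, C, d) = b" "pC (A, b, C, d) = C" "pd (A, b, C, d) = d"
  by (simp_all add: pA_def pb_def pC_def pd_def)

lemma components_padd [simp]:
  "pA (padd \<Theta> \<Theta>') i j = pA \<Theta> i j + pA \<Theta>' i j" "pb (padd \<Theta> \<Theta>') i = pb \<Theta> i + pb \<Theta>' i"
  "pC (padd \<Theta> \<Theta>') i j = pC \<Theta> i j + pC \<Theta>' i j" "pd (padd \<Theta> \<Theta>') i = pd \<Theta> i + pd \<Theta>' i"
  by (simp_all add: padd_def pA_def pb_def pC_def pd_def split: prod.splits)

lemma components_psub [simp]:
  "pA (psub \<Theta> \<Theta>') i j = pA \<Theta> i j - pA \<Theta>' i j" "pb (psub \<Theta> \<Theta>') i = pb \<Theta> i - pb \<Theta>' i"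
  "pC (psub \<Theta> \<Theta>') i j = pC \<Theta> i j - pC \<Theta>' i j" "pd (psub \<Theta> \<Theta>') i = pd \<Theta> i - pd \<Theta>' i"
  by (simp_all add: psub_def pA_def pb_def pC_def pd_def split: prod.splits)

lemma components_pscale [simp]:
  "pA (pscale c \<Theta>) i j = c * pA \<Theta> i j" "pb (pscale c \<Theta>) i = c * pb \<Theta> i"
  "pC (pscale c \<Theta>) i j = c * pC \<Theta> i j" "pd (pscale c \<Theta>) i = c * pd \<Theta> i"
  by (simp_all add: pscale_def pA_def pb_def pC_def pd_def split: prod.splits)

lemma pinner_components:
  "pinner n k l \<Theta> \<Theta>' = (\<Sum>a<l. \<Sum>p<r_dim n. pA \<Theta> a p * pA \<Theta>' a p) + (\<Sum>a<l. pb \<Theta> a * pb \<Theta>' a)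
     + (\<Sum>t<n * k. \<Sum>a<l. pC \<Theta> t a * pC \<Theta>' t a) + (\<Sum>t<n * k. pd \<Theta> t * pd \<Theta>' t)"
  by (simp add: pinner_def pA_def pb_def pC_def pd_def split: prod.splits)

lemma sum_mult_gram_derivative:
  fixes w :: "'i \<Rightarrow> 'i \<Rightarrow> real" and M M' :: "'i \<Rightarrow> 'q \<Rightarrow> real"
  shows "(\<Sum>i\<in>I. \<Sum>j\<in>I. w i j * (\<Sum>q\<in>K. M' i q * M j q + M i q * M' j q))
    = (\<Sum>i\<in>I. \<Sum>q\<in>K. (\<Sum>j\<in>I. (w i j + w j i) * M j q) * M' i q)"
proof -
  have "(\<Sum>i\<in>I. \<Sum>j\<in>I. w i j * (\<Sum>q\<in>K. M' i q * M j q + M i q * M' j q))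
      = (\<Sum>i\<in>I. \<Sum>j\<in>I. \<Sum>q\<in>K. w i j * M j q * M' i q) + (\<Sum>i\<in>I. \<Sum>j\<in>I. \<Sum>q\<in>K. w i j * M i q * M' j q)"
    by (simp add: sum_distrib_left distrib_left sum.distrib mult_ac)
  also have "(\<Sum>i\<in>I. \<Sum>j\<in>I. \<Sum>q\<in>K. w i j * M i q * M' j q) = (\<Sum>i\<in>I. \<Sum>j\<in>I. \<Sum>q\<in>K. w j i * M j q * M' i q)"
    by (rule sum.swap)
  also have "(\<Sum>i\<in>I. \<Sum>j\<in>I. \<Sum>q\<in>K. w i j * M j q * M' i q) + \<dots>
      = (\<Sum>i\<in>I. \<Sum>j\<in>I. \<Sum>q\<in>K. (w i j + w j i) * M j q * M' i q)"
    by (simp add: sum.distrib[symmetric] algebra_simps)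
  also have "\<dots> = (\<Sum>i\<in>I. \<Sum>q\<in>K. (\<Sum>j\<in>I. (w i j + w j i) * M j q) * M' i q)"
    by (simp add: sum_distrib_right sum.swap[of _ I K])
  finally show ?thesis .
qed

lemma length_hvec: "length (hvec n S) = r_dim n"
proof -
  have "length (hvec n S) = (\<Sum>i<n. n - i)"
    by (simp add: hvec_def length_concat sum_list_sum_nth lessThan_atLeast0 comp_def)
  also have "\<dots> = (\<Sum>i<n. Suc i)"
    using sum.nat_diff_reindex[of "\<lambda>i. n - i" n] by (simp add: Suc_diff_Suc)
  also have "\<dots> = (\<Sum>i<Suc n. i)"
    by (simp only: sum.lessThan_Suc_shift)
  also have "\<dots> = \<Sum>{0..n}"
    by (simp add: lessThan_Suc_atMost atLeast0AtMost)
  finally show ?thesis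
    using gauss_sum_nat[of n] by (simp add: r_dim_def)
qed

locale layer_objective =
  fixes \<sigma> \<sigma>' \<mu> \<mu>' :: "real \<Rightarrow> real" and n k l :: nat and S :: "nat \<Rightarrow> nat \<Rightarrow> real"
  assumes \<sigma>_deriv: "\<And>x. (\<sigma> has_real_derivative \<sigma>' x) (at x)"
    and \<mu>_deriv: "\<And>x. (\<mu> has_real_derivative \<mu>' x) (at x)"
begin

definition input :: "nat \<Rightarrow> real" where
  "input p = hvec n S ! p"

definition preact :: "params \<Rightarrow> nat \<Rightarrow> real" where
  "preact \<Theta> a = (\<Sum>p<r_dim n. pA \<Theta> a p * input p) + pb \<Theta> a"

definition Mmat :: "params \<Rightarrow> nat \<Rightarrow> nat \<Rightarrow> real" where
  "Mmat \<Theta> = gmat k (net \<sigma> n l S \<Theta>)"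

definition residual :: "params \<Rightarrow> nat \<Rightarrow> nat \<Rightarrow> real" where
  "residual \<Theta> i j = (\<Sum>q<k. Mmat \<Theta> i q * Mmat \<Theta> j q) - S i j"

text \<open>With \<open>R = M M\<^sup>T - \<Sigma>\<close> the residual, \<open>grad_M\<close>, \<open>grad_net\<close> and \<open>grad_act\<close> are the partial
  derivatives of the objective with respect to \<open>M\<^sub>\<Theta>\<close>, to the network output and to the activations
  \<open>\<sigma>(A x + b)\<close>; they only involve \<open>\<mu>'\<close> through \<open>weight = \<mu>'(R) + \<mu>'(R)\<^sup>T\<close>.\<close>

definition weight :: "params \<Rightarrow> nat \<Rightarrow> nat \<Rightarrow> real" where
  "weight \<Theta> i j = \<mu>' (residual \<Theta> i j) + \<mu>' (residual \<Theta> j i)"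

definition grad_M :: "params \<Rightarrow> nat \<Rightarrow> nat \<Rightarrow> real" where
  "grad_M \<Theta> i q = (\<Sum>j<n. weight \<Theta> i j * Mmat \<Theta> j q)"

definition grad_net :: "params \<Rightarrow> nat \<Rightarrow> real" where
  "grad_net \<Theta> t = grad_M \<Theta> (t div k) (t mod k)"

definition grad_act :: "params \<Rightarrow> nat \<Rightarrow> real" where
  "grad_act \<Theta> a = (\<Sum>t<n * k. grad_net \<Theta> t * pC \<Theta> t a)"

definition grad :: "params \<Rightarrow> params" where
  "grad \<Theta> =
    (\<lambda>a p. \<sigma>' (preact \<Theta> a) * grad_act \<Theta> a * input p,
     \<lambda>a. \<sigma>' (preact \<Theta> a) * grad_act \<Theta> a,
     \<lambda>t a. grad_net \<Theta> t * \<sigma> (preact \<Theta> a),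
     \<lambda>t. grad_net \<Theta> t)"

definition net_dir :: "params \<Rightarrow> params \<Rightarrow> nat \<Rightarrow> real" where
  "net_dir \<Theta> \<Delta> t = (\<Sum>a<l. pC \<Delta> t a * \<sigma> (preact \<Theta> a) + pC \<Theta> t a * \<sigma>' (preact \<Theta> a) * preact \<Delta> a)
     + pd \<Delta> t"

lemma net_eq: "net \<sigma> n l S \<Theta> t = (\<Sum>a<l. pC \<Theta> t a * \<sigma> (preact \<Theta> a)) + pd \<Theta> t"
  by (simp add: net_def preact_def input_def pA_def pb_def pC_def pd_def split: prod.splits)

lemma phi_tilde_eq: "phi_tilde \<sigma> \<mu> n k l S \<Theta> = (\<Sum>i<n. \<Sum>j<n. \<mu> (residual \<Theta> i j))"
  by (simp add: phi_tilde_def residual_def Mmat_def Let_def)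

lemma preact_line: "preact (padd \<Theta> (pscale \<tau> \<Delta>)) a = preact \<Theta> a + \<tau> * preact \<Delta> a"
  by (simp add: preact_def sum.distrib sum_distrib_left algebra_simps)

lemma net_line_deriv:
  "((\<lambda>\<tau>. net \<sigma> n l S (padd \<Theta> (pscale \<tau> \<Delta>)) t) has_real_derivative
     net_dir (padd \<Theta> (pscale \<tau> \<Delta>)) \<Delta> t) (at \<tau>)"
  unfolding net_eq net_dir_def preact_line
  by (auto intro!: derivative_eq_intros DERIV_chain2[OF \<sigma>_deriv] simp: algebra_simps)

lemma residual_line_deriv:
  "((\<lambda>\<tau>. residual (padd \<Theta> (pscale \<tau> \<Delta>)) i j) has_real_derivative
     (\<Sum>q<k. net_dir (padd \<Theta> (pscale \<tau> \<Delta>)) \<Delta> (i * k + q) * Mmat (padd \<Theta> (pscale \<tau> \<Delta>)) j q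
        + Mmat (padd \<Theta> (pscale \<tau> \<Delta>)) i q * net_dir (padd \<Theta> (pscale \<tau> \<Delta>)) \<Delta> (j * k + q))) (at \<tau>)"
  unfolding residual_def Mmat_def gmat_def
  by (auto intro!: derivative_eq_intros net_line_deriv simp: mult.commute)

lemma pinner_grad:
  "pinner n k l (grad \<Theta>) \<Delta> = (\<Sum>t<n * k. grad_net \<Theta> t * net_dir \<Theta> \<Delta> t)"
proof -
  have "(\<Sum>t<n * k. grad_net \<Theta> t * net_dir \<Theta> \<Delta> t)
      = (\<Sum>t<n * k. \<Sum>a<l. grad_net \<Theta> t * \<sigma> (preact \<Theta> a) * pC \<Delta> t a)
        + (\<Sum>t<n * k. \<Sum>a<l. \<sigma>' (preact \<Theta> a) * preact \<Delta> a * (grad_net \<Theta> t * pC \<Theta> t a))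
        + (\<Sum>t<n * k. grad_net \<Theta> t * pd \<Delta> t)"
    by (simp add: net_dir_def distrib_left sum.distrib sum_distrib_left mult_ac)
  also have "(\<Sum>t<n * k. \<Sum>a<l. \<sigma>' (preact \<Theta> a) * preact \<Delta> a * (grad_net \<Theta> t * pC \<Theta> t a))
      = (\<Sum>a<l. \<sigma>' (preact \<Theta> a) * preact \<Delta> a * grad_act \<Theta> a)"
    by (simp only: grad_act_def sum_distrib_left sum.swap[of _ "{..<n * k}" "{..<l}"])
  also have "(\<Sum>a<l. \<sigma>' (preact \<Theta> a) * preact \<Delta> a * grad_act \<Theta> a)
      = (\<Sum>a<l. \<Sum>p<r_dim n. \<sigma>' (preact \<Theta> a) * grad_act \<Theta> a * input p * pA \<Delta> a p)
        + (\<Sum>a<l. \<sigma>' (preact \<Theta> a) * grad_act \<Theta> a * pb \<Delta> a)"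
    by (simp add: preact_def[of \<Delta>] distrib_left sum_distrib_left sum.distrib mult_ac)
  finally show ?thesis
    by (simp add: pinner_components grad_def)
qed

lemma phi_tilde_line_deriv:
  "((\<lambda>\<tau>. phi_tilde \<sigma> \<mu> n k l S (padd \<Theta> (pscale \<tau> \<Delta>))) has_real_derivative
     pinner n k l (grad (padd \<Theta> (pscale \<tau> \<Delta>))) \<Delta>) (at \<tau>)"
proof -
  let ?\<Theta> = "padd \<Theta> (pscale \<tau> \<Delta>)"
  have "(\<Sum>i<n. \<Sum>j<n. \<mu>' (residual ?\<Theta> i j) *
          (\<Sum>q<k. net_dir ?\<Theta> \<Delta> (i * k + q) * Mmat ?\<Theta> j q + Mmat ?\<Theta> i q * net_dir ?\<Theta> \<Delta> (j * k + q)))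
      = (\<Sum>i<n. \<Sum>q<k. grad_M ?\<Theta> i q * net_dir ?\<Theta> \<Delta> (i * k + q))"
    unfolding grad_M_def weight_def by (rule sum_mult_gram_derivative)
  also have "\<dots> = pinner n k l (grad ?\<Theta>) \<Delta>"
    by (simp add: pinner_grad grad_net_def sum_lessThan_mult)
  finally show ?thesis
    unfolding phi_tilde_eq
    by (auto intro!: derivative_eq_intros DERIV_chain2[OF \<mu>_deriv] residual_line_deriv)
qed

end

section \<open>Lipschitz estimates\<close>

locale smooth_layer_objective = layer_objective +
  fixes \<sigma>'' \<mu>'' :: "real \<Rightarrow> real" and s1 s2 m2 :: real
  assumes \<sigma>'_deriv: "\<And>x. (\<sigma>' has_real_derivative \<sigma>'' x) (at x)"
    and \<mu>'_deriv: "\<And>x. (\<mu>' has_real_derivative \<mu>'' x) (at x)"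
    and \<sigma>_bound: "\<And>x. \<bar>\<sigma> x\<bar> \<le> 1" and \<sigma>'_bound: "\<And>x. \<bar>\<sigma>' x\<bar> \<le> s1"
    and \<sigma>''_bound: "\<And>x. \<bar>\<sigma>'' x\<bar> \<le> s2"
    and \<mu>'_bound: "\<And>x. \<bar>\<mu>' x\<bar> \<le> 1" and \<mu>''_bound: "\<And>x. \<bar>\<mu>'' x\<bar> \<le> m2"
begin

definition sqnorm_Ab :: "params \<Rightarrow> real" where
  "sqnorm_Ab \<Theta> = (\<Sum>a<l. (\<Sum>p<r_dim n. (pA \<Theta> a p)\<^sup>2) + (pb \<Theta> a)\<^sup>2)"

definition sqnorm_C :: "params \<Rightarrow> real" where
  "sqnorm_C \<Theta> = (\<Sum>t<n * k. \<Sum>a<l. (pC \<Theta> t a)\<^sup>2)"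

definition sqnorm_d :: "params \<Rightarrow> real" where
  "sqnorm_d \<Theta> = (\<Sum>t<n * k. (pd \<Theta> t)\<^sup>2)"

lemma sqnorm_nonneg: "0 \<le> sqnorm_Ab \<Theta>" "0 \<le> sqnorm_C \<Theta>" "0 \<le> sqnorm_d \<Theta>"
  by (simp_all add: sqnorm_Ab_def sqnorm_C_def sqnorm_d_def sum_nonneg add_nonneg_nonneg)

lemma pnorm_sq_components: "(pnorm n k l \<Theta>)\<^sup>2 = sqnorm_Ab \<Theta> + sqnorm_C \<Theta> + sqnorm_d \<Theta>"
proof -
  have "(pnorm n k l \<Theta>)\<^sup>2 = (\<Sum>a<l. \<Sum>p<r_dim n. (pA \<Theta> a p)\<^sup>2) + (\<Sum>a<l. (pb \<Theta> a)\<^sup>2)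
      + sqnorm_C \<Theta> + sqnorm_d \<Theta>"
    by (simp add: pnorm_def sqnorm_C_def sqnorm_d_def pA_def pb_def pC_def pd_def sum_nonneg
        split: prod.splits)
  then show ?thesis by (simp add: sqnorm_Ab_def sum.distrib)
qed

lemma sqnorm_le_pnorm_sq:
  "sqnorm_Ab \<Theta> \<le> (pnorm n k l \<Theta>)\<^sup>2" "sqnorm_C \<Theta> \<le> (pnorm n k l \<Theta>)\<^sup>2" "sqnorm_d \<Theta> \<le> (pnorm n k l \<Theta>)\<^sup>2"
  using sqnorm_nonneg[of \<Theta>] by (simp_all add: pnorm_sq_components)

lemma sum_input_sq: "(\<Sum>p<r_dim n. (input p)\<^sup>2) = (norm_S n S)\<^sup>2"
  by (simp add: norm_S_def input_def sum_list_sum_nth length_hvec lessThan_atLeast0 sum_nonneg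
      sum_list_nonneg)

lemma preact_psub: "preact \<Theta> a - preact \<Theta>' a = preact (psub \<Theta> \<Theta>') a"
  by (simp add: preact_def left_diff_distrib sum_subtractf)

lemma preact_sq_le:
  "(preact \<Delta> a)\<^sup>2 \<le> 2 * (1 + (norm_S n S)\<^sup>2) * ((\<Sum>p<r_dim n. (pA \<Delta> a p)\<^sup>2) + (pb \<Delta> a)\<^sup>2)"
proof -
  define P where "P = (\<Sum>p<r_dim n. (pA \<Delta> a p)\<^sup>2)"
  have "(\<Sum>p<r_dim n. pA \<Delta> a p * input p)\<^sup>2 \<le> P * (norm_S n S)\<^sup>2"
    unfolding P_def sum_input_sq[symmetric] by (rule Cauchy_Schwarz_ineq_sum)
  then have "(preact \<Delta> a)\<^sup>2 \<le> 2 * (P * (norm_S n S)\<^sup>2) + 2 * (pb \<Delta> a)\<^sup>2"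
    using square_add_le[of "\<Sum>p<r_dim n. pA \<Delta> a p * input p" "pb \<Delta> a"]
    by (simp add: preact_def)
  also have "\<dots> \<le> 2 * (1 + (norm_S n S)\<^sup>2) * (P + (pb \<Delta> a)\<^sup>2)"
    by (simp add: algebra_simps P_def sum_nonneg)
  finally show ?thesis unfolding P_def .
qed

lemma sum_preact_sq_le: "(\<Sum>a<l. (preact \<Delta> a)\<^sup>2) \<le> 2 * (1 + (norm_S n S)\<^sup>2) * sqnorm_Ab \<Delta>"
  unfolding sqnorm_Ab_def sum_distrib_left by (intro sum_mono preact_sq_le)

lemma preact_diff_sq_le:
  assumes "a < l"
  shows "(preact \<Theta> a - preact \<Theta>' a)\<^sup>2 \<le> 2 * (1 + (norm_S n S)\<^sup>2) * sqnorm_Ab (psub \<Theta> \<Theta>')"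
proof -
  have "(preact \<Theta> a - preact \<Theta>' a)\<^sup>2
      \<le> 2 * (1 + (norm_S n S)\<^sup>2) * ((\<Sum>p<r_dim n. (pA (psub \<Theta> \<Theta>') a p)\<^sup>2) + (pb (psub \<Theta> \<Theta>') a)\<^sup>2)"
    unfolding preact_psub by (rule preact_sq_le)
  also have "\<dots> \<le> 2 * (1 + (norm_S n S)\<^sup>2) * sqnorm_Ab (psub \<Theta> \<Theta>')"
    unfolding sqnorm_Ab_def using assms
    by (intro mult_left_mono member_le_sum) (auto intro!: add_nonneg_nonneg sum_nonneg)
  finally show ?thesis .
qed

lemma sum_act_sq_le: "(\<Sum>a<l. (\<sigma> (z a))\<^sup>2) \<le> real l"
proof -
  have "(\<Sum>a<l. (\<sigma> (z a))\<^sup>2) \<le> (\<Sum>a<l. 1)"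
    using \<sigma>_bound by (intro sum_mono) (simp add: abs_square_le_1)
  then show ?thesis by simp
qed

lemma sum_act_diff_sq_le:
  "(\<Sum>a<l. (\<sigma> (preact \<Theta> a) - \<sigma> (preact \<Theta>' a))\<^sup>2)
     \<le> 2 * s1\<^sup>2 * (1 + (norm_S n S)\<^sup>2) * sqnorm_Ab (psub \<Theta> \<Theta>')"
proof -
  have "(\<Sum>a<l. (\<sigma> (preact \<Theta> a) - \<sigma> (preact \<Theta>' a))\<^sup>2) \<le> (\<Sum>a<l. s1\<^sup>2 * (preact (psub \<Theta> \<Theta>') a)\<^sup>2)"
    unfolding preact_psub[symmetric]
    by (intro sum_mono) (rule square_diff_le_of_deriv_bound[OF \<sigma>_deriv \<sigma>'_bound])
  also have "\<dots> \<le> s1\<^sup>2 * (2 * (1 + (norm_S n S)\<^sup>2) * sqnorm_Ab (psub \<Theta> \<Theta>'))"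
    unfolding sum_distrib_left[symmetric] by (intro mult_left_mono sum_preact_sq_le) simp
  finally show ?thesis by (simp only: mult_ac)
qed

lemma sum_net_sq_le:
  assumes "1 \<le> l"
  shows "(\<Sum>t<n * k. (net \<sigma> n l S \<Theta> t)\<^sup>2) \<le> 2 * real l * (pnorm n k l \<Theta>)\<^sup>2"
proof -
  have pointwise: "(net \<sigma> n l S \<Theta> t)\<^sup>2 \<le> 2 * real l * (\<Sum>a<l. (pC \<Theta> t a)\<^sup>2) + 2 * (pd \<Theta> t)\<^sup>2" for t
  proof -
    have "(\<Sum>a<l. pC \<Theta> t a * \<sigma> (preact \<Theta> a))\<^sup>2 \<le> (\<Sum>a<l. (pC \<Theta> t a)\<^sup>2) * (\<Sum>a<l. (\<sigma> (preact \<Theta> a))\<^sup>2)"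
      by (rule Cauchy_Schwarz_ineq_sum)
    also have "\<dots> \<le> (\<Sum>a<l. (pC \<Theta> t a)\<^sup>2) * real l"
      by (intro mult_left_mono sum_act_sq_le sum_nonneg) simp
    finally show ?thesis
      using square_add_le[of "\<Sum>a<l. pC \<Theta> t a * \<sigma> (preact \<Theta> a)" "pd \<Theta> t"]
      by (simp add: net_eq mult_ac)
  qed
  have "(\<Sum>t<n * k. (net \<sigma> n l S \<Theta> t)\<^sup>2)
      \<le> (\<Sum>t<n * k. 2 * real l * (\<Sum>a<l. (pC \<Theta> t a)\<^sup>2) + 2 * (pd \<Theta> t)\<^sup>2)"
    by (intro sum_mono pointwise)
  also have "\<dots> = 2 * real l * sqnorm_C \<Theta> + 2 * sqnorm_d \<Theta>"
    by (simp add: sqnorm_C_def sqnorm_d_def sum.distrib sum_distrib_left)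
  also have "\<dots> \<le> 2 * real l * (sqnorm_Ab \<Theta> + sqnorm_C \<Theta> + sqnorm_d \<Theta>)"
  proof -
    have "1 \<le> real l" using assms by simp
    then have "sqnorm_d \<Theta> \<le> real l * sqnorm_d \<Theta>" "0 \<le> real l * sqnorm_Ab \<Theta>"
      using mult_right_mono[of 1 "real l" "sqnorm_d \<Theta>"] sqnorm_nonneg[of \<Theta>] by auto
    then show ?thesis by (simp add: ring_distribs)
  qed
  finally show ?thesis by (simp add: pnorm_sq_components)
qed

lemma net_diff_sq_le:
  "(net \<sigma> n l S \<Theta> t - net \<sigma> n l S \<Theta>' t)\<^sup>2
     \<le> 3 * real l * (\<Sum>a<l. (pC \<Theta> t a - pC \<Theta>' t a)\<^sup>2)
       + 3 * (\<Sum>a<l. (pC \<Theta>' t a)\<^sup>2) * (\<Sum>a<l. (\<sigma> (preact \<Theta> a) - \<sigma> (preact \<Theta>' a))\<^sup>2)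
       + 3 * (pd \<Theta> t - pd \<Theta>' t)\<^sup>2"
proof -
  have split: "net \<sigma> n l S \<Theta> t - net \<sigma> n l S \<Theta>' t
      = (\<Sum>a<l. (pC \<Theta> t a - pC \<Theta>' t a) * \<sigma> (preact \<Theta> a))
        + (\<Sum>a<l. pC \<Theta>' t a * (\<sigma> (preact \<Theta> a) - \<sigma> (preact \<Theta>' a))) + (pd \<Theta> t - pd \<Theta>' t)"
    by (simp add: net_eq sum_subtractf[symmetric] sum.distrib[symmetric] algebra_simps)
  have "(\<Sum>a<l. (pC \<Theta> t a - pC \<Theta>' t a) * \<sigma> (preact \<Theta> a))\<^sup>2
      \<le> (\<Sum>a<l. (pC \<Theta> t a - pC \<Theta>' t a)\<^sup>2) * (\<Sum>a<l. (\<sigma> (preact \<Theta> a))\<^sup>2)"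
    by (rule Cauchy_Schwarz_ineq_sum)
  also have "\<dots> \<le> (\<Sum>a<l. (pC \<Theta> t a - pC \<Theta>' t a)\<^sup>2) * real l"
    by (intro mult_left_mono sum_act_sq_le sum_nonneg) simp
  finally have "(\<Sum>a<l. (pC \<Theta> t a - pC \<Theta>' t a) * \<sigma> (preact \<Theta> a))\<^sup>2
      \<le> real l * (\<Sum>a<l. (pC \<Theta> t a - pC \<Theta>' t a)\<^sup>2)"
    by (simp add: mult.commute)
  moreover have "(\<Sum>a<l. pC \<Theta>' t a * (\<sigma> (preact \<Theta> a) - \<sigma> (preact \<Theta>' a)))\<^sup>2
      \<le> (\<Sum>a<l. (pC \<Theta>' t a)\<^sup>2) * (\<Sum>a<l. (\<sigma> (preact \<Theta> a) - \<sigma> (preact \<Theta>' a))\<^sup>2)"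
    by (rule Cauchy_Schwarz_ineq_sum)
  ultimately show ?thesis
    unfolding split
    using square_add3_le[of "\<Sum>a<l. (pC \<Theta> t a - pC \<Theta>' t a) * \<sigma> (preact \<Theta> a)"
        "\<Sum>a<l. pC \<Theta>' t a * (\<sigma> (preact \<Theta> a) - \<sigma> (preact \<Theta>' a))" "pd \<Theta> t - pd \<Theta>' t"]
    by linarith
qed

lemma sum_net_diff_sq_le:
  "(\<Sum>t<n * k. (net \<sigma> n l S \<Theta> t - net \<sigma> n l S \<Theta>' t)\<^sup>2)
     \<le> 3 * real l * sqnorm_C (psub \<Theta> \<Theta>')
       + 3 * sqnorm_C \<Theta>' * (\<Sum>a<l. (\<sigma> (preact \<Theta> a) - \<sigma> (preact \<Theta>' a))\<^sup>2)
       + 3 * sqnorm_d (psub \<Theta> \<Theta>')"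
proof -
  define SD where "SD = (\<Sum>a<l. (\<sigma> (preact \<Theta> a) - \<sigma> (preact \<Theta>' a))\<^sup>2)"
  have "(\<Sum>t<n * k. (net \<sigma> n l S \<Theta> t - net \<sigma> n l S \<Theta>' t)\<^sup>2)
      \<le> (\<Sum>t<n * k. 3 * real l * (\<Sum>a<l. (pC \<Theta> t a - pC \<Theta>' t a)\<^sup>2)
         + 3 * (\<Sum>a<l. (pC \<Theta>' t a)\<^sup>2) * SD + 3 * (pd \<Theta> t - pd \<Theta>' t)\<^sup>2)"
    unfolding SD_def by (intro sum_mono net_diff_sq_le)
  also have "\<dots> = 3 * real l * sqnorm_C (psub \<Theta> \<Theta>') + 3 * sqnorm_C \<Theta>' * SD + 3 * sqnorm_d (psub \<Theta> \<Theta>')"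
    by (simp add: sqnorm_C_def sqnorm_d_def sum.distrib sum_distrib_left sum_distrib_right)
  finally show ?thesis unfolding SD_def .
qed

lemma sum_Mmat:
  "(\<Sum>i<n. \<Sum>q<k. g (Mmat \<Theta> i q) (Mmat \<Theta>' i q))
     = (\<Sum>t<n * k. g (net \<sigma> n l S \<Theta> t) (net \<sigma> n l S \<Theta>' t))"
  by (simp add: Mmat_def gmat_def sum_lessThan_mult)

lemma sum_grad_net:
  "(\<Sum>t<n * k. g (grad_net \<Theta> t) (grad_net \<Theta>' t))
     = (\<Sum>i<n. \<Sum>q<k. g (grad_M \<Theta> i q) (grad_M \<Theta>' i q))"
  unfolding grad_net_def
  by (rule sum_lessThan_mult_div_mod[where g = "\<lambda>i q. g (grad_M \<Theta> i q) (grad_M \<Theta>' i q)"])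

lemma sum_residual_diff_sq_le:
  "(\<Sum>i<n. \<Sum>j<n. (residual \<Theta> i j - residual \<Theta>' i j)\<^sup>2)
     \<le> 2 * ((\<Sum>t<n * k. (net \<sigma> n l S \<Theta> t - net \<sigma> n l S \<Theta>' t)\<^sup>2) * (\<Sum>t<n * k. (net \<sigma> n l S \<Theta> t)\<^sup>2))
       + 2 * ((\<Sum>t<n * k. (net \<sigma> n l S \<Theta>' t)\<^sup>2) * (\<Sum>t<n * k. (net \<sigma> n l S \<Theta> t - net \<sigma> n l S \<Theta>' t)\<^sup>2))"
proof -
  let ?M = "Mmat \<Theta>" and ?M' = "Mmat \<Theta>'"
  have "(\<Sum>i<n. \<Sum>j<n. (residual \<Theta> i j - residual \<Theta>' i j)\<^sup>2)
      = (\<Sum>i<n. \<Sum>j<n. ((\<Sum>q<k. ?M i q * ?M j q) - (\<Sum>q<k. ?M' i q * ?M' j q))\<^sup>2)"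
    by (simp add: residual_def)
  also have "\<dots> \<le> 2 * ((\<Sum>i<n. \<Sum>q<k. (?M i q - ?M' i q)\<^sup>2) * (\<Sum>q<k. \<Sum>j<n. (?M j q)\<^sup>2))
      + 2 * ((\<Sum>i<n. \<Sum>q<k. (?M' i q)\<^sup>2) * (\<Sum>q<k. \<Sum>j<n. (?M j q - ?M' j q)\<^sup>2))"
    by (rule sum_sq_matrix_mult_diff_le[where Q = "\<lambda>q j. ?M j q" and Q' = "\<lambda>q j. ?M' j q"])
  finally show ?thesis
    by (simp only: sum.swap[where A = "{..<k}" and B = "{..<n}"] sum_Mmat[where g = "\<lambda>x y. (x - y)\<^sup>2"]
        sum_Mmat[where g = "\<lambda>x y. x\<^sup>2" and \<Theta>' = \<Theta>] sum_Mmat[where g = "\<lambda>x y. x\<^sup>2" and \<Theta> = \<Theta>' and \<Theta>' = \<Theta>'])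
qed

lemma sum_weight_diff_sq_le:
  "(\<Sum>i<n. \<Sum>j<n. (weight \<Theta> i j - weight \<Theta>' i j)\<^sup>2)
     \<le> 4 * m2\<^sup>2 * (\<Sum>i<n. \<Sum>j<n. (residual \<Theta> i j - residual \<Theta>' i j)\<^sup>2)"
proof -
  have "(\<Sum>i<n. \<Sum>j<n. (weight \<Theta> i j - weight \<Theta>' i j)\<^sup>2)
      \<le> 4 * (\<Sum>i<n. \<Sum>j<n. (\<mu>' (residual \<Theta> i j) - \<mu>' (residual \<Theta>' i j))\<^sup>2)"
    unfolding weight_def by (rule sum_sq_symmetrize_diff_le)
  also have "(\<Sum>i<n. \<Sum>j<n. (\<mu>' (residual \<Theta> i j) - \<mu>' (residual \<Theta>' i j))\<^sup>2)
      \<le> m2\<^sup>2 * (\<Sum>i<n. \<Sum>j<n. (residual \<Theta> i j - residual \<Theta>' i j)\<^sup>2)"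
    unfolding sum_distrib_left
    by (intro sum_mono) (rule square_diff_le_of_deriv_bound[OF \<mu>'_deriv \<mu>''_bound])
  finally show ?thesis by (simp add: mult_ac)
qed

lemma sum_weight_sq_le: "(\<Sum>i<n. \<Sum>j<n. (weight \<Theta> i j)\<^sup>2) \<le> 4 * (real n)\<^sup>2"
proof -
  have \<mu>'_sq: "(\<mu>' x)\<^sup>2 \<le> 1" for x
    using \<mu>'_bound[of x] by (simp add: abs_square_le_1)
  have "(weight \<Theta> i j)\<^sup>2 \<le> 4" for i j
    using square_add_le[of "\<mu>' (residual \<Theta> i j)" "\<mu>' (residual \<Theta> j i)"]
      \<mu>'_sq[of "residual \<Theta> i j"] \<mu>'_sq[of "residual \<Theta> j i"]
    unfolding weight_def by linarith
  then have "(\<Sum>i<n. \<Sum>j<n. (weight \<Theta> i j)\<^sup>2) \<le> (\<Sum>i<n. \<Sum>j<n. 4)"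
    by (intro sum_mono)
  then show ?thesis by (simp add: power2_eq_square)
qed

lemma sum_grad_net_diff_sq_le:
  "(\<Sum>t<n * k. (grad_net \<Theta> t - grad_net \<Theta>' t)\<^sup>2)
     \<le> 2 * ((\<Sum>i<n. \<Sum>j<n. (weight \<Theta> i j - weight \<Theta>' i j)\<^sup>2) * (\<Sum>t<n * k. (net \<sigma> n l S \<Theta> t)\<^sup>2))
       + 2 * ((\<Sum>i<n. \<Sum>j<n. (weight \<Theta>' i j)\<^sup>2) * (\<Sum>t<n * k. (net \<sigma> n l S \<Theta> t - net \<sigma> n l S \<Theta>' t)\<^sup>2))"
  unfolding sum_grad_net[where g = "\<lambda>x y. (x - y)\<^sup>2"] grad_M_def
    sum_Mmat[where g = "\<lambda>x y. x\<^sup>2", symmetric] sum_Mmat[where g = "\<lambda>x y. (x - y)\<^sup>2", symmetric]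
  by (rule sum_sq_matrix_mult_diff_le)

lemma sum_grad_net_sq_le:
  "(\<Sum>t<n * k. (grad_net \<Theta> t)\<^sup>2)
     \<le> (\<Sum>i<n. \<Sum>j<n. (weight \<Theta> i j)\<^sup>2) * (\<Sum>t<n * k. (net \<sigma> n l S \<Theta> t)\<^sup>2)"
  unfolding sum_grad_net[where g = "\<lambda>x y. x\<^sup>2" and \<Theta>' = \<Theta>] grad_M_def
    sum_Mmat[where g = "\<lambda>x y. x\<^sup>2" and \<Theta>' = \<Theta>, symmetric]
  by (rule sum_sq_matrix_mult_le)

lemma sum_grad_act_diff_sq_le:
  "(\<Sum>a<l. (grad_act \<Theta> a - grad_act \<Theta>' a)\<^sup>2)
     \<le> 2 * ((\<Sum>t<n * k. (grad_net \<Theta> t - grad_net \<Theta>' t)\<^sup>2) * sqnorm_C \<Theta>)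
       + 2 * ((\<Sum>t<n * k. (grad_net \<Theta>' t)\<^sup>2) * sqnorm_C (psub \<Theta> \<Theta>'))"
  using sum_sq_matrix_mult_diff_le[where I = "{()}" and P = "\<lambda>_. grad_net \<Theta>" and P' = "\<lambda>_. grad_net \<Theta>'"
      and Q = "pC \<Theta>" and Q' = "pC \<Theta>'" and J = "{..<n * k}" and K = "{..<l}"]
  by (simp add: grad_act_def sqnorm_C_def)

lemma sum_grad_act_sq_le:
  "(\<Sum>a<l. (grad_act \<Theta> a)\<^sup>2) \<le> (\<Sum>t<n * k. (grad_net \<Theta> t)\<^sup>2) * sqnorm_C \<Theta>"
  using sum_sq_matrix_mult_le[where I = "{()}" and P = "\<lambda>_. grad_net \<Theta>" and Q = "pC \<Theta>"
      and J = "{..<n * k}" and K = "{..<l}"]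
  by (simp add: grad_act_def sqnorm_C_def)

lemma pnorm_grad_diff_sq:
  "(pnorm n k l (psub (grad \<Theta>) (grad \<Theta>')))\<^sup>2
     = (1 + (norm_S n S)\<^sup>2) * (\<Sum>a<l. (\<sigma>' (preact \<Theta> a) * grad_act \<Theta> a - \<sigma>' (preact \<Theta>' a) * grad_act \<Theta>' a)\<^sup>2)
       + (\<Sum>t<n * k. \<Sum>a<l. (grad_net \<Theta> t * \<sigma> (preact \<Theta> a) - grad_net \<Theta>' t * \<sigma> (preact \<Theta>' a))\<^sup>2)
       + (\<Sum>t<n * k. (grad_net \<Theta> t - grad_net \<Theta>' t)\<^sup>2)"
proof -
  have "(\<Sum>p<r_dim n. (c * input p - c' * input p)\<^sup>2) = (c - c')\<^sup>2 * (norm_S n S)\<^sup>2" for c c'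
    by (simp add: sum_input_sq[symmetric] sum_distrib_left power_mult_distrib left_diff_distrib[symmetric])
  then have "sqnorm_Ab (psub (grad \<Theta>) (grad \<Theta>'))
      = (\<Sum>a<l. (\<sigma>' (preact \<Theta> a) * grad_act \<Theta> a - \<sigma>' (preact \<Theta>' a) * grad_act \<Theta>' a)\<^sup>2 * (norm_S n S)\<^sup>2
           + (\<sigma>' (preact \<Theta> a) * grad_act \<Theta> a - \<sigma>' (preact \<Theta>' a) * grad_act \<Theta>' a)\<^sup>2)"
    by (simp add: sqnorm_Ab_def grad_def)
  also have "\<dots> = (1 + (norm_S n S)\<^sup>2)
      * (\<Sum>a<l. (\<sigma>' (preact \<Theta> a) * grad_act \<Theta> a - \<sigma>' (preact \<Theta>' a) * grad_act \<Theta>' a)\<^sup>2)"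
    by (simp add: sum.distrib sum_distrib_left distrib_right mult.commute)
  finally show ?thesis
    by (simp add: pnorm_sq_components sqnorm_C_def sqnorm_d_def grad_def)
qed

lemma sum_grad_b_diff_sq_le:
  "(\<Sum>a<l. (\<sigma>' (preact \<Theta> a) * grad_act \<Theta> a - \<sigma>' (preact \<Theta>' a) * grad_act \<Theta>' a)\<^sup>2)
     \<le> 2 * s1\<^sup>2 * (\<Sum>a<l. (grad_act \<Theta> a - grad_act \<Theta>' a)\<^sup>2)
       + 4 * s2\<^sup>2 * (1 + (norm_S n S)\<^sup>2) * sqnorm_Ab (psub \<Theta> \<Theta>') * (\<Sum>a<l. (grad_act \<Theta>' a)\<^sup>2)"
proof -
  define T where "T = 1 + (norm_S n S)\<^sup>2"
  let ?u = "grad_act \<Theta>" and ?u' = "grad_act \<Theta>'" and ?z = "preact \<Theta>" and ?z' = "preact \<Theta>'"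
  have "(\<sigma>' (?z a) * ?u a - \<sigma>' (?z' a) * ?u' a)\<^sup>2
      \<le> 2 * s1\<^sup>2 * (?u a - ?u' a)\<^sup>2 + 4 * s2\<^sup>2 * T * sqnorm_Ab (psub \<Theta> \<Theta>') * (?u' a)\<^sup>2"
    if "a < l" for a
  proof -
    have "(\<sigma>' (?z a))\<^sup>2 \<le> s1\<^sup>2"
      using power_mono[OF \<sigma>'_bound[of "?z a"] abs_ge_zero, of 2] by simp
    then have t1: "(\<sigma>' (?z a) * (?u a - ?u' a))\<^sup>2 \<le> s1\<^sup>2 * (?u a - ?u' a)\<^sup>2"
      by (simp add: power_mult_distrib mult_right_mono)
    have "(?z a - ?z' a)\<^sup>2 \<le> 2 * T * sqnorm_Ab (psub \<Theta> \<Theta>')"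
      unfolding T_def using \<open>a < l\<close> by (rule preact_diff_sq_le)
    then have "(\<sigma>' (?z a) - \<sigma>' (?z' a))\<^sup>2 \<le> s2\<^sup>2 * (2 * T * sqnorm_Ab (psub \<Theta> \<Theta>'))"
      using square_diff_le_of_deriv_bound[OF \<sigma>'_deriv \<sigma>''_bound, of "?z a" "?z' a"]
      by (meson order_trans mult_left_mono zero_le_power2)
    then have t2: "((\<sigma>' (?z a) - \<sigma>' (?z' a)) * ?u' a)\<^sup>2 \<le> s2\<^sup>2 * (2 * T * sqnorm_Ab (psub \<Theta> \<Theta>')) * (?u' a)\<^sup>2"
      by (simp add: power_mult_distrib mult_right_mono)
    have "\<sigma>' (?z a) * ?u a - \<sigma>' (?z' a) * ?u' a = \<sigma>' (?z a) * (?u a - ?u' a) + (\<sigma>' (?z a) - \<sigma>' (?z' a)) * ?u' a"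
      by (simp add: algebra_simps)
    then show ?thesis
      using square_add_le[of "\<sigma>' (?z a) * (?u a - ?u' a)" "(\<sigma>' (?z a) - \<sigma>' (?z' a)) * ?u' a"] t1 t2
      by (simp add: algebra_simps)
  qed
  then have "(\<Sum>a<l. (\<sigma>' (?z a) * ?u a - \<sigma>' (?z' a) * ?u' a)\<^sup>2)
      \<le> (\<Sum>a<l. 2 * s1\<^sup>2 * (?u a - ?u' a)\<^sup>2 + 4 * s2\<^sup>2 * T * sqnorm_Ab (psub \<Theta> \<Theta>') * (?u' a)\<^sup>2)"
    by (intro sum_mono) simp
  also have "\<dots> = 2 * s1\<^sup>2 * (\<Sum>a<l. (?u a - ?u' a)\<^sup>2) + 4 * s2\<^sup>2 * T * sqnorm_Ab (psub \<Theta> \<Theta>') * (\<Sum>a<l. (?u' a)\<^sup>2)"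
    by (simp add: sum.distrib sum_distrib_left)
  finally show ?thesis unfolding T_def .
qed

lemma sum_grad_C_diff_sq_le:
  "(\<Sum>t<n * k. \<Sum>a<l. (grad_net \<Theta> t * \<sigma> (preact \<Theta> a) - grad_net \<Theta>' t * \<sigma> (preact \<Theta>' a))\<^sup>2)
     \<le> 2 * real l * (\<Sum>t<n * k. (grad_net \<Theta> t - grad_net \<Theta>' t)\<^sup>2)
       + 2 * (\<Sum>t<n * k. (grad_net \<Theta>' t)\<^sup>2) * (\<Sum>a<l. (\<sigma> (preact \<Theta> a) - \<sigma> (preact \<Theta>' a))\<^sup>2)"
proof -
  let ?dE = "\<Sum>t<n * k. (grad_net \<Theta> t - grad_net \<Theta>' t)\<^sup>2"
  have "?dE * (\<Sum>a<l. (\<sigma> (preact \<Theta> a))\<^sup>2) \<le> ?dE * real l"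
    by (intro mult_left_mono sum_act_sq_le sum_nonneg) simp
  then have "(\<Sum>t<n * k. \<Sum>a<l. (grad_net \<Theta> t * \<sigma> (preact \<Theta> a) - grad_net \<Theta>' t * \<sigma> (preact \<Theta>' a))\<^sup>2)
     \<le> 2 * (?dE * real l)
       + 2 * ((\<Sum>t<n * k. (grad_net \<Theta>' t)\<^sup>2) * (\<Sum>a<l. (\<sigma> (preact \<Theta> a) - \<sigma> (preact \<Theta>' a))\<^sup>2))"
    using sum_sq_outer_diff_le[where \<alpha> = "grad_net \<Theta>" and \<beta> = "\<lambda>a. \<sigma> (preact \<Theta> a)"
        and \<alpha>' = "grad_net \<Theta>'" and \<beta>' = "\<lambda>a. \<sigma> (preact \<Theta>' a)" and I = "{..<n * k}" and J = "{..<l}"]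
    by linarith
  then show ?thesis by (simp only: mult_ac)
qed

text \<open>The constant \<open>C\<^sub>\<phi>\<close> of the statement will be \<open>2 ^ 20 * \<kappa> ^ 3\<close>.\<close>

definition \<kappa> :: real where
  "\<kappa> = (1 + s1\<^sup>2) * (1 + s2\<^sup>2) * (1 + m2\<^sup>2)"

lemma \<kappa>_ge: "1 \<le> \<kappa>" "s1\<^sup>2 \<le> \<kappa>" "s2\<^sup>2 \<le> \<kappa>" "m2\<^sup>2 \<le> \<kappa>"
proof -
  have prod_ge: "x \<le> (1 + x) * ((1 + y\<^sup>2) * (1 + z\<^sup>2))" "1 \<le> (1 + x) * ((1 + y\<^sup>2) * (1 + z\<^sup>2))"
    if "0 \<le> x" for x y z :: real
  proof -
    have "1 \<le> (1 + y\<^sup>2) * (1 + z\<^sup>2)"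
      using mult_mono[of 1 "1 + y\<^sup>2" 1 "1 + z\<^sup>2"] by simp
    then have "1 + x \<le> (1 + x) * ((1 + y\<^sup>2) * (1 + z\<^sup>2))"
      using mult_left_mono[of 1 _ "1 + x"] that by simp
    then show "x \<le> (1 + x) * ((1 + y\<^sup>2) * (1 + z\<^sup>2))" "1 \<le> (1 + x) * ((1 + y\<^sup>2) * (1 + z\<^sup>2))"
      using that by linarith+
  qed
  show "1 \<le> \<kappa>" "s1\<^sup>2 \<le> \<kappa>" "s2\<^sup>2 \<le> \<kappa>" "m2\<^sup>2 \<le> \<kappa>"
    using prod_ge[of "s1\<^sup>2" s2 m2] prod_ge[of "s2\<^sup>2" s1 m2] prod_ge[of "m2\<^sup>2" s1 s2]
    by (simp_all add: \<kappa>_def mult_ac)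
qed

context
  fixes D :: real
  assumes l_pos: "1 \<le> l"
begin

lemma sum_net_sq_le_D:
  "pnorm n k l \<Theta> \<le> D \<Longrightarrow> (\<Sum>t<n * k. (net \<sigma> n l S \<Theta> t)\<^sup>2) \<le> 2 * real l * D\<^sup>2"
  using order_trans[OF sum_net_sq_le[OF l_pos] mult_left_mono[OF pnorm_sq_le]] by simp

lemma sum_grad_net_sq_le_D:
  assumes "pnorm n k l \<Theta> \<le> D"
  shows "(\<Sum>t<n * k. (grad_net \<Theta> t)\<^sup>2) \<le> 8 * (real n)\<^sup>2 * real l * D\<^sup>2"
proof -
  have "(\<Sum>t<n * k. (grad_net \<Theta> t)\<^sup>2) \<le> (4 * (real n)\<^sup>2) * (2 * real l * D\<^sup>2)"
    using sum_grad_net_sq_le[of \<Theta>] sum_weight_sq_le[of \<Theta>] sum_net_sq_le_D[OF assms]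
    by (meson order_trans mult_mono sum_nonneg zero_le_power2)
  then show ?thesis by simp
qed

lemma sum_grad_act_sq_le_D:
  assumes "pnorm n k l \<Theta> \<le> D"
  shows "(\<Sum>a<l. (grad_act \<Theta> a)\<^sup>2) \<le> 8 * (real n)\<^sup>2 * real l * D\<^sup>2 * D\<^sup>2"
  using sum_grad_act_sq_le[of \<Theta>] sum_grad_net_sq_le_D[OF assms]
    order_trans[OF sqnorm_le_pnorm_sq(2) pnorm_sq_le[OF assms]]
  by (meson order_trans mult_mono sum_nonneg zero_le_power2 sqnorm_nonneg)

context
  fixes \<Theta> \<Theta>' :: params
  assumes norm_le: "pnorm n k l \<Theta> \<le> D" "pnorm n k l \<Theta>' \<le> D"
begin

lemma sum_net_diff_sq_le_D:
  "(\<Sum>t<n * k. (net \<sigma> n l S \<Theta> t - net \<sigma> n l S \<Theta>' t)\<^sup>2)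
     \<le> 6 * \<kappa> * (real l + (1 + (norm_S n S)\<^sup>2) * D\<^sup>2) * (pnorm n k l (psub \<Theta> \<Theta>'))\<^sup>2"
proof -
  define \<delta> where "\<delta> = (pnorm n k l (psub \<Theta> \<Theta>'))\<^sup>2"
  define T where "T = 1 + (norm_S n S)\<^sup>2"
  define SD where "SD = (\<Sum>a<l. (\<sigma> (preact \<Theta> a) - \<sigma> (preact \<Theta>' a))\<^sup>2)"
  have \<delta>: "0 \<le> \<delta>" "sqnorm_Ab (psub \<Theta> \<Theta>') \<le> \<delta>" "sqnorm_C (psub \<Theta> \<Theta>') \<le> \<delta>" "sqnorm_d (psub \<Theta> \<Theta>') \<le> \<delta>"
    unfolding \<delta>_def by (simp_all add: sqnorm_le_pnorm_sq)
  have T: "1 \<le> T" by (simp add: T_def)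
  have "SD \<le> 2 * s1\<^sup>2 * T * sqnorm_Ab (psub \<Theta> \<Theta>')"
    unfolding SD_def T_def by (rule sum_act_diff_sq_le)
  also have "\<dots> \<le> 2 * \<kappa> * T * \<delta>"
    using \<kappa>_ge(1,2) \<delta> T sqnorm_nonneg(1)[of "psub \<Theta> \<Theta>'"]
    by (intro mult_mono mult_left_mono) auto
  finally have SD: "SD \<le> 2 * \<kappa> * T * \<delta>" .
  have "sqnorm_C \<Theta>' * SD \<le> D\<^sup>2 * (2 * \<kappa> * T * \<delta>)"
    using sqnorm_le_pnorm_sq(2)[of \<Theta>'] pnorm_sq_le[OF norm_le(2)] SD
    by (intro mult_mono) (auto simp: SD_def sum_nonneg)
  moreover have "real l * sqnorm_C (psub \<Theta> \<Theta>') \<le> real l * \<delta>"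
    using \<delta> by (simp add: mult_left_mono)
  moreover have "\<delta> \<le> real l * \<delta>" "real l * \<delta> \<le> \<kappa> * (real l * \<delta>)"
    using l_pos \<delta>(1) \<kappa>_ge(1) mult_right_mono[of 1 "real l" \<delta>] mult_right_mono[of 1 \<kappa> "real l * \<delta>"]
    by auto
  moreover have "6 * \<kappa> * (real l + T * D\<^sup>2) * \<delta> = 6 * (\<kappa> * (real l * \<delta>)) + 3 * (D\<^sup>2 * (2 * \<kappa> * T * \<delta>))"
    by (simp add: algebra_simps)
  moreover have "(\<Sum>t<n * k. (net \<sigma> n l S \<Theta> t - net \<sigma> n l S \<Theta>' t)\<^sup>2)
      \<le> 3 * (real l * sqnorm_C (psub \<Theta> \<Theta>')) + 3 * (sqnorm_C \<Theta>' * SD) + 3 * sqnorm_d (psub \<Theta> \<Theta>')"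
    using sum_net_diff_sq_le[of \<Theta> \<Theta>'] by (simp add: SD_def mult.assoc)
  ultimately show ?thesis
    using \<delta>(4) unfolding \<delta>_def[symmetric] T_def[symmetric] by linarith
qed

lemma sum_weight_diff_sq_le_D:
  "(\<Sum>i<n. \<Sum>j<n. (weight \<Theta> i j - weight \<Theta>' i j)\<^sup>2)
     \<le> 32 * m2\<^sup>2 * real l * D\<^sup>2 * (\<Sum>t<n * k. (net \<sigma> n l S \<Theta> t - net \<sigma> n l S \<Theta>' t)\<^sup>2)"
proof -
  define dN where "dN = (\<Sum>t<n * k. (net \<sigma> n l S \<Theta> t - net \<sigma> n l S \<Theta>' t)\<^sup>2)"
  define N N' where "N = (\<Sum>t<n * k. (net \<sigma> n l S \<Theta> t)\<^sup>2)" and "N' = (\<Sum>t<n * k. (net \<sigma> n l S \<Theta>' t)\<^sup>2)"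
  have dN: "0 \<le> dN" by (simp add: dN_def sum_nonneg)
  have "(\<Sum>i<n. \<Sum>j<n. (residual \<Theta> i j - residual \<Theta>' i j)\<^sup>2) \<le> 2 * (dN * N) + 2 * (N' * dN)"
    unfolding dN_def N_def N'_def by (rule sum_residual_diff_sq_le)
  also have "\<dots> \<le> 8 * real l * D\<^sup>2 * dN"
    using mult_left_mono[OF sum_net_sq_le_D[OF norm_le(1)] dN]
      mult_right_mono[OF sum_net_sq_le_D[OF norm_le(2)] dN]
    by (simp add: N_def N'_def algebra_simps)
  finally have "4 * m2\<^sup>2 * (\<Sum>i<n. \<Sum>j<n. (residual \<Theta> i j - residual \<Theta>' i j)\<^sup>2)
      \<le> 4 * m2\<^sup>2 * (8 * real l * D\<^sup>2 * dN)"
    by (rule mult_left_mono) simp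
  then show ?thesis
    using sum_weight_diff_sq_le[of \<Theta> \<Theta>'] by (simp add: dN_def mult_ac)
qed

lemma sum_grad_net_diff_sq_le_D:
  "(\<Sum>t<n * k. (grad_net \<Theta> t - grad_net \<Theta>' t)\<^sup>2)
     \<le> 128 * \<kappa> * ((real l)\<^sup>2 * D ^ 4 + (real n)\<^sup>2) * (\<Sum>t<n * k. (net \<sigma> n l S \<Theta> t - net \<sigma> n l S \<Theta>' t)\<^sup>2)"
proof -
  define dN where "dN = (\<Sum>t<n * k. (net \<sigma> n l S \<Theta> t - net \<sigma> n l S \<Theta>' t)\<^sup>2)"
  define dV where "dV = (\<Sum>i<n. \<Sum>j<n. (weight \<Theta> i j - weight \<Theta>' i j)\<^sup>2)"
  define V' where "V' = (\<Sum>i<n. \<Sum>j<n. (weight \<Theta>' i j)\<^sup>2)"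
  have dN: "0 \<le> dN" by (simp add: dN_def sum_nonneg)
  have "dV * (\<Sum>t<n * k. (net \<sigma> n l S \<Theta> t)\<^sup>2) \<le> (32 * m2\<^sup>2 * real l * D\<^sup>2 * dN) * (2 * real l * D\<^sup>2)"
    using sum_weight_diff_sq_le_D sum_net_sq_le_D[OF norm_le(1)] dN
    by (intro mult_mono) (auto simp: dV_def dN_def sum_nonneg)
  also have "\<dots> = 64 * m2\<^sup>2 * ((real l)\<^sup>2 * D ^ 4 * dN)"
    by (simp add: power2_eq_square power4_eq_xxxx)
  also have "\<dots> \<le> 64 * \<kappa> * ((real l)\<^sup>2 * D ^ 4 * dN)"
    using \<kappa>_ge(4) dN by (intro mult_right_mono mult_left_mono) auto
  finally have first: "dV * (\<Sum>t<n * k. (net \<sigma> n l S \<Theta> t)\<^sup>2) \<le> 64 * \<kappa> * ((real l)\<^sup>2 * D ^ 4 * dN)" .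
  have "V' * dN \<le> 4 * (real n)\<^sup>2 * dN"
    unfolding V'_def using sum_weight_sq_le dN by (rule mult_right_mono)
  also have "\<dots> \<le> \<kappa> * (4 * (real n)\<^sup>2 * dN)"
    using \<kappa>_ge(1) dN by (intro le_mult_of_one_le) auto
  finally have second: "V' * dN \<le> \<kappa> * (4 * (real n)\<^sup>2 * dN)" .
  have "0 \<le> \<kappa> * ((real n)\<^sup>2 * dN)" using \<kappa>_ge(1) dN by simp
  moreover have "128 * \<kappa> * ((real l)\<^sup>2 * D ^ 4 + (real n)\<^sup>2) * dN
      = 2 * (64 * \<kappa> * ((real l)\<^sup>2 * D ^ 4 * dN)) + 2 * (\<kappa> * (4 * (real n)\<^sup>2 * dN))
        + 120 * (\<kappa> * ((real n)\<^sup>2 * dN))"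
    by (simp add: algebra_simps)
  ultimately show ?thesis
    using sum_grad_net_diff_sq_le[of \<Theta> \<Theta>'] first second
    unfolding dV_def[symmetric] V'_def[symmetric] dN_def[symmetric] by linarith
qed

lemma sum_grad_net_diff_sq_le_pnorm:
  "(\<Sum>t<n * k. (grad_net \<Theta> t - grad_net \<Theta>' t)\<^sup>2)
     \<le> 768 * \<kappa>\<^sup>2 * ((real l)\<^sup>2 * D ^ 4 + (real n)\<^sup>2) * (real l + (1 + (norm_S n S)\<^sup>2) * D\<^sup>2)
       * (pnorm n k l (psub \<Theta> \<Theta>'))\<^sup>2"
proof -
  have "(\<Sum>t<n * k. (grad_net \<Theta> t - grad_net \<Theta>' t)\<^sup>2)
      \<le> 128 * \<kappa> * ((real l)\<^sup>2 * D ^ 4 + (real n)\<^sup>2)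
        * (6 * \<kappa> * (real l + (1 + (norm_S n S)\<^sup>2) * D\<^sup>2) * (pnorm n k l (psub \<Theta> \<Theta>'))\<^sup>2)"
    using \<kappa>_ge(1)
    by (intro order_trans[OF sum_grad_net_diff_sq_le_D] mult_left_mono sum_net_diff_sq_le_D) simp_all
  also have "\<dots> = 768 * \<kappa>\<^sup>2 * ((real l)\<^sup>2 * D ^ 4 + (real n)\<^sup>2) * (real l + (1 + (norm_S n S)\<^sup>2) * D\<^sup>2)
       * (pnorm n k l (psub \<Theta> \<Theta>'))\<^sup>2"
    by (simp add: power2_eq_square algebra_simps)
  finally show ?thesis .
qed

lemma sum_grad_act_diff_sq_le_D:
  "(\<Sum>a<l. (grad_act \<Theta> a - grad_act \<Theta>' a)\<^sup>2)
     \<le> 2 * D\<^sup>2 * (\<Sum>t<n * k. (grad_net \<Theta> t - grad_net \<Theta>' t)\<^sup>2)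
       + 16 * (real n)\<^sup>2 * real l * D\<^sup>2 * (pnorm n k l (psub \<Theta> \<Theta>'))\<^sup>2"
proof -
  define dE where "dE = (\<Sum>t<n * k. (grad_net \<Theta> t - grad_net \<Theta>' t)\<^sup>2)"
  have "dE * sqnorm_C \<Theta> \<le> dE * D\<^sup>2"
    using order_trans[OF sqnorm_le_pnorm_sq(2) pnorm_sq_le[OF norm_le(1)]]
    by (intro mult_left_mono) (auto simp: dE_def sum_nonneg)
  moreover have "(\<Sum>t<n * k. (grad_net \<Theta>' t)\<^sup>2) * sqnorm_C (psub \<Theta> \<Theta>')
      \<le> (8 * (real n)\<^sup>2 * real l * D\<^sup>2) * (pnorm n k l (psub \<Theta> \<Theta>'))\<^sup>2"
    using sum_grad_net_sq_le_D[OF norm_le(2)] sqnorm_le_pnorm_sq(2)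
    by (intro mult_mono) (auto simp: sum_nonneg sqnorm_nonneg)
  ultimately show ?thesis
    using sum_grad_act_diff_sq_le[of \<Theta> \<Theta>'] unfolding dE_def[symmetric] by (simp add: algebra_simps)
qed

lemma sum_grad_b_diff_sq_le_D:
  "(\<Sum>a<l. (\<sigma>' (preact \<Theta> a) * grad_act \<Theta> a - \<sigma>' (preact \<Theta>' a) * grad_act \<Theta>' a)\<^sup>2)
     \<le> 2 * \<kappa> * (\<Sum>a<l. (grad_act \<Theta> a - grad_act \<Theta>' a)\<^sup>2)
       + 32 * \<kappa> * (1 + (norm_S n S)\<^sup>2) * (real n)\<^sup>2 * real l * D ^ 4 * (pnorm n k l (psub \<Theta> \<Theta>'))\<^sup>2"
proof -
  define T where "T = 1 + (norm_S n S)\<^sup>2"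
  define dU where "dU = (\<Sum>a<l. (grad_act \<Theta> a - grad_act \<Theta>' a)\<^sup>2)"
  define U' where "U' = (\<Sum>a<l. (grad_act \<Theta>' a)\<^sup>2)"
  have "s1\<^sup>2 * dU \<le> \<kappa> * dU"
    using \<kappa>_ge(2) by (intro mult_right_mono) (auto simp: dU_def sum_nonneg)
  moreover have "s2\<^sup>2 * T * sqnorm_Ab (psub \<Theta> \<Theta>') * U'
      \<le> \<kappa> * T * (pnorm n k l (psub \<Theta> \<Theta>'))\<^sup>2 * (8 * (real n)\<^sup>2 * real l * D\<^sup>2 * D\<^sup>2)"
    using \<kappa>_ge(1,3) sqnorm_le_pnorm_sq(1) sqnorm_nonneg(1) sum_grad_act_sq_le_D[OF norm_le(2)]
    by (intro mult_mono) (auto simp: T_def U'_def sum_nonneg)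
  ultimately show ?thesis
    using sum_grad_b_diff_sq_le[of \<Theta> \<Theta>'] unfolding T_def[symmetric] dU_def[symmetric] U'_def[symmetric]
    by (simp add: algebra_simps power4_eq_xxxx power2_eq_square)
qed

lemma sum_grad_C_diff_sq_le_D:
  "(\<Sum>t<n * k. \<Sum>a<l. (grad_net \<Theta> t * \<sigma> (preact \<Theta> a) - grad_net \<Theta>' t * \<sigma> (preact \<Theta>' a))\<^sup>2)
     \<le> 2 * real l * (\<Sum>t<n * k. (grad_net \<Theta> t - grad_net \<Theta>' t)\<^sup>2)
       + 32 * \<kappa> * (real n)\<^sup>2 * real l * D\<^sup>2 * (1 + (norm_S n S)\<^sup>2) * (pnorm n k l (psub \<Theta> \<Theta>'))\<^sup>2"
proof -
  have "(\<Sum>a<l. (\<sigma> (preact \<Theta> a) - \<sigma> (preact \<Theta>' a))\<^sup>2)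
      \<le> 2 * \<kappa> * (1 + (norm_S n S)\<^sup>2) * (pnorm n k l (psub \<Theta> \<Theta>'))\<^sup>2"
    using sum_act_diff_sq_le[of \<Theta> \<Theta>'] \<kappa>_ge(1,2) sqnorm_le_pnorm_sq(1) sqnorm_nonneg(1)
    by (smt (verit) mult_mono mult_right_mono zero_le_power2 add_nonneg_nonneg zero_le_one mult_nonneg_nonneg)
  then have "(\<Sum>t<n * k. (grad_net \<Theta>' t)\<^sup>2) * (\<Sum>a<l. (\<sigma> (preact \<Theta> a) - \<sigma> (preact \<Theta>' a))\<^sup>2)
      \<le> (8 * (real n)\<^sup>2 * real l * D\<^sup>2) * (2 * \<kappa> * (1 + (norm_S n S)\<^sup>2) * (pnorm n k l (psub \<Theta> \<Theta>'))\<^sup>2)"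
    using sum_grad_net_sq_le_D[OF norm_le(2)] by (intro mult_mono) (auto simp: sum_nonneg)
  then show ?thesis
    using sum_grad_C_diff_sq_le[of \<Theta> \<Theta>'] by (simp add: algebra_simps)
qed

end

end

end

section \<open>The Lipschitz constant\<close>

definition lip_growth :: "nat \<Rightarrow> nat \<Rightarrow> nat \<Rightarrow> real \<Rightarrow> real \<Rightarrow> real" where
  "lip_growth n k l D LZ =
     max (D ^ 4 * LZ ^ 4) (max (real l * D ^ 8 * LZ ^ 4) (max (real l ^ 2 * D ^ 6 * LZ ^ 2)
       (max (real n * D ^ 2 * LZ ^ 2) (max (real n * real k * real l) (real l ^ 3 * D ^ 4)))))"

lemma lip_growth_dominates:
  fixes T D :: real
  assumes T: "1 \<le> T" and n: "1 \<le> n" and k: "1 \<le> k" and l: "1 \<le> l"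
  defines "B \<equiv> (real n)\<^sup>2 * real l * lip_growth n k l D (sqrt T)"
  shows "real l * ((real l)\<^sup>2 * D ^ 6 * T) \<le> B" "real l * (real l * D ^ 8 * T\<^sup>2) \<le> B"
    "real l * (real l ^ 3 * D ^ 4) \<le> B" "(real n)\<^sup>2 * real l * (D\<^sup>2 * T) \<le> B"
    "(real n)\<^sup>2 * real l * real l \<le> B" "(real n)\<^sup>2 * real l * (D ^ 4 * T\<^sup>2) \<le> B"
    "(real n)\<^sup>2 * (T\<^sup>2 * D ^ 4) \<le> B"
proof -
  define N L M where "N = real n" and "L = real l" and "M = lip_growth n k l D (sqrt T)"
  have N: "1 \<le> N" and L: "1 \<le> L" and NK: "1 \<le> N * real k"
    using n l k mult_mono[of 1 "real n" 1 "real k"] by (simp_all add: N_def L_def)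
  have sqrt_T: "sqrt T ^ 2 = T" "sqrt T ^ 4 = T\<^sup>2"
  proof -
    show "sqrt T ^ 2 = T" using T by simp
    moreover have "sqrt T ^ 4 = (sqrt T ^ 2) ^ 2" by (simp flip: power_mult)
    ultimately show "sqrt T ^ 4 = T\<^sup>2" by simp
  qed
  have M: "D ^ 4 * T\<^sup>2 \<le> M" "L * D ^ 8 * T\<^sup>2 \<le> M" "L\<^sup>2 * D ^ 6 * T \<le> M" "N * D\<^sup>2 * T \<le> M"
    "N * real k * L \<le> M" "L ^ 3 * D ^ 4 \<le> M"
    unfolding M_def lip_growth_def sqrt_T N_def L_def by simp_all
  have "0 \<le> D ^ 4 * T\<^sup>2" by simp
  then have M0: "0 \<le> M" using M(1) by linarith
  have L_scaled: "L * x \<le> N\<^sup>2 * L * M" if "x \<le> M" for x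
  proof -
    have "L * x \<le> L * M" using that L by simp
    also have "\<dots> \<le> N\<^sup>2 * (L * M)" using N L M0 by (intro le_mult_of_one_le) simp_all
    finally show ?thesis by (simp add: mult_ac)
  qed
  have NL_scaled: "N\<^sup>2 * L * x \<le> N\<^sup>2 * L * M" if "x \<le> M" for x
    using that L by (simp add: mult_left_mono)
  have "D\<^sup>2 * T \<le> N * D\<^sup>2 * T" "L \<le> N * real k * L"
    using le_mult_of_one_le[OF N, of "D\<^sup>2 * T"] le_mult_of_one_le[OF NK, of L] L T
    by (simp_all add: mult.assoc)
  then have "N\<^sup>2 * L * (D\<^sup>2 * T) \<le> N\<^sup>2 * L * M" "N\<^sup>2 * L * L \<le> N\<^sup>2 * L * M"
    using NL_scaled M(4,5) by (meson order_trans)+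
  moreover have "N\<^sup>2 * (T\<^sup>2 * D ^ 4) \<le> N\<^sup>2 * L * (D ^ 4 * T\<^sup>2)"
    using le_mult_of_one_le[OF L, of "N\<^sup>2 * (T\<^sup>2 * D ^ 4)"] by (simp add: mult_ac)
  ultimately show "real l * ((real l)\<^sup>2 * D ^ 6 * T) \<le> B" "real l * (real l * D ^ 8 * T\<^sup>2) \<le> B"
    "real l * (real l ^ 3 * D ^ 4) \<le> B" "(real n)\<^sup>2 * real l * (D\<^sup>2 * T) \<le> B"
    "(real n)\<^sup>2 * real l * real l \<le> B" "(real n)\<^sup>2 * real l * (D ^ 4 * T\<^sup>2) \<le> B"
    "(real n)\<^sup>2 * (T\<^sup>2 * D ^ 4) \<le> B"
    using L_scaled[OF M(3)] L_scaled[OF M(2)] L_scaled[OF M(6)] NL_scaled[OF M(1)]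
    unfolding B_def N_def[symmetric] L_def[symmetric] M_def[symmetric] by linarith+
qed

lemma lipschitz_polynomial_le:
  fixes \<kappa> T D :: real
  assumes \<kappa>: "1 \<le> \<kappa>" and T: "1 \<le> T" and n: "1 \<le> n" and k: "1 \<le> k" and l: "1 \<le> l"
  defines "P \<equiv> 768 * \<kappa>\<^sup>2 * ((real l)\<^sup>2 * D ^ 4 + (real n)\<^sup>2) * (real l + T * D\<^sup>2)"
  shows "T * (2 * \<kappa> * (2 * D\<^sup>2 * P + 16 * (real n)\<^sup>2 * real l * D\<^sup>2) + 32 * \<kappa> * T * (real n)\<^sup>2 * real l * D ^ 4)
      + 2 * real l * P + 32 * \<kappa> * (real n)\<^sup>2 * real l * D\<^sup>2 * T + P
    \<le> 2 ^ 20 * \<kappa> ^ 3 * (real n)\<^sup>2 * real l * lip_growth n k l D (sqrt T)"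
proof -
  define N L B Q where "N = real n" and "L = real l"
    and "B = (real n)\<^sup>2 * real l * lip_growth n k l D (sqrt T)"
    and "Q = (L\<^sup>2 * D ^ 4 + N\<^sup>2) * (L + T * D\<^sup>2)"
  note dom = lip_growth_dominates[OF T n k l, of D, folded B_def N_def L_def]
  have L: "1 \<le> L" and Q0: "0 \<le> Q" and B0: "0 \<le> B"
    using l T dom(5) by (simp_all add: L_def Q_def) (smt (verit) mult_nonneg_nonneg of_nat_0_le_iff zero_le_power2)
  have "T * D\<^sup>2 * Q = L * (L\<^sup>2 * D ^ 6 * T) + L * (L * D ^ 8 * T\<^sup>2) + N\<^sup>2 * L * (D\<^sup>2 * T) + N\<^sup>2 * (T\<^sup>2 * D ^ 4)"
    "L * Q = L * (L ^ 3 * D ^ 4) + L * (L\<^sup>2 * D ^ 6 * T) + N\<^sup>2 * L * L + N\<^sup>2 * L * (D\<^sup>2 * T)"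
    unfolding Q_def by (simp_all add: algebra_simps power2_eq_square power3_eq_cube eval_nat_numeral)
  then have Q: "T * D\<^sup>2 * Q \<le> 4 * B" "L * Q \<le> 4 * B" "Q \<le> 4 * B"
    using dom le_mult_of_one_le[OF L Q0] by linarith+
  have \<kappa>3: "\<kappa> \<le> \<kappa> ^ 3" "\<kappa>\<^sup>2 \<le> \<kappa> ^ 3"
    using power_increasing[of 1 3 \<kappa>] power_increasing[of 2 3 \<kappa>] \<kappa> by simp_all
  have "\<kappa> ^ 3 * (T * D\<^sup>2 * Q) \<le> \<kappa> ^ 3 * (4 * B)" "\<kappa> * (N\<^sup>2 * L * (D\<^sup>2 * T)) \<le> \<kappa> ^ 3 * B"
    "\<kappa> * (N\<^sup>2 * L * (D ^ 4 * T\<^sup>2)) \<le> \<kappa> ^ 3 * B" "\<kappa>\<^sup>2 * (L * Q) \<le> \<kappa> ^ 3 * (4 * B)"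
    "\<kappa>\<^sup>2 * Q \<le> \<kappa> ^ 3 * (4 * B)"
    using \<kappa> L T Q0 B0 by (intro mult_mono Q dom \<kappa>3 mult_left_mono; simp)+
  moreover have "T * (2 * \<kappa> * (2 * D\<^sup>2 * P + 16 * (real n)\<^sup>2 * real l * D\<^sup>2) + 32 * \<kappa> * T * (real n)\<^sup>2 * real l * D ^ 4)
      + 2 * real l * P + 32 * \<kappa> * (real n)\<^sup>2 * real l * D\<^sup>2 * T + P
    = 3072 * (\<kappa> ^ 3 * (T * D\<^sup>2 * Q)) + 64 * (\<kappa> * (N\<^sup>2 * L * (D\<^sup>2 * T)))
      + 32 * (\<kappa> * (N\<^sup>2 * L * (D ^ 4 * T\<^sup>2))) + 1536 * (\<kappa>\<^sup>2 * (L * Q)) + 768 * (\<kappa>\<^sup>2 * Q)"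
    unfolding P_def Q_def N_def L_def
    by (simp add: algebra_simps power2_eq_square power3_eq_cube eval_nat_numeral)
  moreover have "0 \<le> \<kappa> ^ 3 * B" using \<kappa> B0 by simp
  ultimately show ?thesis
    by (simp add: B_def mult_ac)
qed

context smooth_layer_objective
begin

lemma pnorm_grad_diff_sq_le:
  assumes n: "1 \<le> n" and k: "1 \<le> k" and l: "1 \<le> l"
    and norm_le: "pnorm n k l \<Theta> \<le> D" "pnorm n k l \<Theta>' \<le> D"
  shows "(pnorm n k l (psub (grad \<Theta>) (grad \<Theta>')))\<^sup>2
    \<le> 2 ^ 20 * \<kappa> ^ 3 * (real n)\<^sup>2 * real l * lip_growth n k l D (sqrt (1 + (norm_S n S)\<^sup>2))
       * (pnorm n k l (psub \<Theta> \<Theta>'))\<^sup>2"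
proof -
  define \<delta> where "\<delta> = (pnorm n k l (psub \<Theta> \<Theta>'))\<^sup>2"
  define T where "T = 1 + (norm_S n S)\<^sup>2"
  define P where "P = 768 * \<kappa>\<^sup>2 * ((real l)\<^sup>2 * D ^ 4 + (real n)\<^sup>2) * (real l + T * D\<^sup>2)"
  define dE where "dE = (\<Sum>t<n * k. (grad_net \<Theta> t - grad_net \<Theta>' t)\<^sup>2)"
  have \<delta>: "0 \<le> \<delta>" and T: "1 \<le> T" by (simp_all add: \<delta>_def T_def)
  have dE: "dE \<le> P * \<delta>"
    unfolding dE_def P_def T_def \<delta>_def by (rule sum_grad_net_diff_sq_le_pnorm[OF l norm_le])
  have "(\<Sum>a<l. (grad_act \<Theta> a - grad_act \<Theta>' a)\<^sup>2) \<le> 2 * D\<^sup>2 * (P * \<delta>) + 16 * (real n)\<^sup>2 * real l * D\<^sup>2 * \<delta>"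
    using sum_grad_act_diff_sq_le_D[OF l norm_le] mult_left_mono[OF dE, of "2 * D\<^sup>2"]
    unfolding dE_def \<delta>_def by simp
  then have A: "(\<Sum>a<l. (\<sigma>' (preact \<Theta> a) * grad_act \<Theta> a - \<sigma>' (preact \<Theta>' a) * grad_act \<Theta>' a)\<^sup>2)
      \<le> 2 * \<kappa> * (2 * D\<^sup>2 * (P * \<delta>) + 16 * (real n)\<^sup>2 * real l * D\<^sup>2 * \<delta>)
        + 32 * \<kappa> * T * (real n)\<^sup>2 * real l * D ^ 4 * \<delta>"
    using sum_grad_b_diff_sq_le_D[OF l norm_le] mult_left_mono[of _ _ "2 * \<kappa>"] \<kappa>_ge(1)
    unfolding \<delta>_def T_def by (smt (verit) zero_le_one)
  have C: "(\<Sum>t<n * k. \<Sum>a<l. (grad_net \<Theta> t * \<sigma> (preact \<Theta> a) - grad_net \<Theta>' t * \<sigma> (preact \<Theta>' a))\<^sup>2)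
      \<le> 2 * real l * (P * \<delta>) + 32 * \<kappa> * (real n)\<^sup>2 * real l * D\<^sup>2 * T * \<delta>"
    using sum_grad_C_diff_sq_le_D[OF l norm_le] mult_left_mono[OF dE, of "2 * real l"]
    unfolding dE_def \<delta>_def T_def by simp
  have "(pnorm n k l (psub (grad \<Theta>) (grad \<Theta>')))\<^sup>2
      \<le> (T * (2 * \<kappa> * (2 * D\<^sup>2 * P + 16 * (real n)\<^sup>2 * real l * D\<^sup>2) + 32 * \<kappa> * T * (real n)\<^sup>2 * real l * D ^ 4)
          + 2 * real l * P + 32 * \<kappa> * (real n)\<^sup>2 * real l * D\<^sup>2 * T + P) * \<delta>"
    using pnorm_grad_diff_sq[of \<Theta> \<Theta>'] mult_left_mono[OF A, of T] C dE T
    unfolding T_def[symmetric] dE_def[symmetric] by (simp add: algebra_simps)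
  also have "\<dots> \<le> 2 ^ 20 * \<kappa> ^ 3 * (real n)\<^sup>2 * real l * lip_growth n k l D (sqrt T) * \<delta>"
    unfolding P_def by (intro mult_right_mono lipschitz_polynomial_le \<kappa>_ge(1) T n k l \<delta>)
  finally show ?thesis unfolding \<delta>_def T_def .
qed

lemma grad_lipschitz:
  assumes "1 \<le> n" "1 \<le> k" "1 \<le> l" "pnorm n k l \<Theta> \<le> D" "pnorm n k l \<Theta>' \<le> D"
  shows "pnorm n k l (psub (grad \<Theta>) (grad \<Theta>'))
    \<le> sqrt (2 ^ 20 * \<kappa> ^ 3 * (real n)\<^sup>2 * real l * lip_growth n k l D (sqrt (1 + (norm_S n S)\<^sup>2)))
       * pnorm n k l (psub \<Theta> \<Theta>')"
  using real_sqrt_le_mono[OF pnorm_grad_diff_sq_le[OF assms]]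
  by (simp add: real_sqrt_mult pnorm_nonneg)

lemma has_pgrad_grad:
  assumes "1 \<le> n" "1 \<le> k" "1 \<le> l"
  shows "has_pgrad n k l (phi_tilde \<sigma> \<mu> n k l S) \<Theta> (grad \<Theta>)"
proof (rule has_pgrad_of_line_derivative[where R = "pnorm n k l \<Theta> + 1"])
  show "0 \<le> sqrt (2 ^ 20 * \<kappa> ^ 3 * (real n)\<^sup>2 * real l
      * lip_growth n k l (pnorm n k l \<Theta> + 1) (sqrt (1 + (norm_S n S)\<^sup>2)))"
    using \<kappa>_ge(1) by (simp add: lip_growth_def le_max_iff_disj)
qed (use phi_tilde_line_deriv grad_lipschitz[OF assms] in auto)

lemma has_pgrad_lipschitz:
  assumes "1 \<le> n" "1 \<le> k" "1 \<le> l" and "pnorm n k l \<Theta> \<le> D" "pnorm n k l \<Theta>' \<le> D"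
    and "has_pgrad n k l (phi_tilde \<sigma> \<mu> n k l S) \<Theta> G" "has_pgrad n k l (phi_tilde \<sigma> \<mu> n k l S) \<Theta>' G'"
  shows "pnorm n k l (psub G G')
    \<le> sqrt (2 ^ 20 * \<kappa> ^ 3 * (real n)\<^sup>2 * real l * lip_growth n k l D (sqrt (1 + (norm_S n S)\<^sup>2)))
       * pnorm n k l (psub \<Theta> \<Theta>')"
  using pnorm_psub_has_pgrad_cong[OF assms(6) has_pgrad_grad[OF assms(1-3)] assms(7) has_pgrad_grad[OF assms(1-3)]]
    grad_lipschitz[OF assms(1-5)]
  by simp

end

definition cubed_sq_coeff :: "nat \<Rightarrow> real" where
  "cubed_sq_coeff i = (if i = 0 \<or> i = 6 then 1 else if i = 2 \<or> i = 4 then 3 else 0)"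

lemma sum_cubed_sq_coeff: "(\<Sum>i\<le>6. cubed_sq_coeff i * x ^ i) = (1 + x\<^sup>2) ^ 3"
  by (simp add: cubed_sq_coeff_def eval_nat_numeral atMost_Suc power2_eq_square algebra_simps)

lemma poly3_product:
  "poly3 (\<lambda>i j m. K * c i * c j * c m) N x y z
     = K * (\<Sum>i\<le>N. c i * x ^ i) * (\<Sum>j\<le>N. c j * y ^ j) * (\<Sum>m\<le>N. c m * z ^ m)"
  by (simp add: poly3_def sum_product sum_distrib_left mult_ac)

theorem lemma6:
  "\<exists>(c :: nat \<Rightarrow> nat \<Rightarrow> nat \<Rightarrow> real) (N :: nat).
   \<forall>(\<sigma> :: real \<Rightarrow> real) (\<sigma>1 :: real \<Rightarrow> real) (\<sigma>2 :: real \<Rightarrow> real) (s1 :: real) (s2 :: real)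
     (\<mu>d :: nat \<Rightarrow> real \<Rightarrow> real) (m2 :: real) (n :: nat) (k :: nat) (l :: nat)
     (S :: nat \<Rightarrow> nat \<Rightarrow> real) (D :: real).
     1 \<le> n \<and> 1 \<le> k \<and> k \<le> n \<and> 1 \<le> l
     \<and> (\<forall>i<n. \<forall>j<n. S i j = S j i) \<and> D > 0
     \<and> (\<forall>x. \<bar>\<sigma> x\<bar> \<le> 1)
     \<and> (\<forall>x. (\<sigma> has_real_derivative \<sigma>1 x) (at x))
     \<and> (\<forall>x. (\<sigma>1 has_real_derivative \<sigma>2 x) (at x))
     \<and> s1 > 0 \<and> (\<forall>x. \<bar>\<sigma>1 x\<bar> \<le> s1) \<and> (\<forall>x. \<bar>\<sigma>2 x\<bar> \<le> s2)
     \<and> (\<forall>j x. (\<mu>d j has_real_derivative \<mu>d (Suc j) x) (at x))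
     \<and> (\<forall>x. \<bar>\<mu>d 1 x\<bar> \<le> 1) \<and> (\<forall>x. \<bar>\<mu>d 2 x\<bar> \<le> m2)
   \<longrightarrow>
     (let f = phi_tilde \<sigma> (\<mu>d 0) n k l S;
          Cphi = poly3 c N s1 s2 m2;
          LZ = sqrt (1 + (norm_S n S)\<^sup>2);
          L = sqrt (Cphi * real n ^ 2 * real l *
                max (D ^ 4 * LZ ^ 4) (max (real l * D ^ 8 * LZ ^ 4) (max (real l ^ 2 * D ^ 6 * LZ ^ 2)
                  (max (real n * D ^ 2 * LZ ^ 2) (max (real n * real k * real l) (real l ^ 3 * D ^ 4))))))
      in 0 \<le> Cphi
         \<and> (\<forall>\<Theta>. pnorm n k l \<Theta> \<le> D \<longrightarrow> (\<exists>G. has_pgrad n k l f \<Theta> G))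
         \<and> (\<forall>\<Theta> \<Theta>' G G'. pnorm n k l \<Theta> \<le> D \<longrightarrow> pnorm n k l \<Theta>' \<le> D
              \<longrightarrow> has_pgrad n k l f \<Theta> G \<longrightarrow> has_pgrad n k l f \<Theta>' G'
              \<longrightarrow> pnorm n k l (psub G G') \<le> L * pnorm n k l (psub \<Theta> \<Theta>')))"
  apply (intro exI[of _ "\<lambda>i j m. 2 ^ 20 * cubed_sq_coeff i * cubed_sq_coeff j * cubed_sq_coeff m"]
      exI[of _ 6] allI impI, elim conjE)
  subgoal premises hyps for \<sigma> \<sigma>1 \<sigma>2 s1 s2 \<mu>d m2 n k l S D
  proof -
    have n: "1 \<le> n" and k: "1 \<le> k" and l: "1 \<le> l" using hyps(1,2,4) .
    interpret smooth_layer_objective \<sigma> \<sigma>1 "\<mu>d 0" "\<mu>d 1" n k l S \<sigma>2 "\<mu>d 2" s1 s2 m2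
      using hyps(7-9,11-15) hyps(13)[rule_format, of 0] hyps(13)[rule_format, of 1]
      by unfold_locales (simp_all add: numeral_2_eq_2)
    have Cphi: "poly3 (\<lambda>i j m. 2 ^ 20 * cubed_sq_coeff i * cubed_sq_coeff j * cubed_sq_coeff m) 6 s1 s2 m2
        = 2 ^ 20 * \<kappa> ^ 3"
      by (simp add: poly3_product sum_cubed_sq_coeff \<kappa>_def power_mult_distrib)
    have "0 \<le> 2 ^ 20 * \<kappa> ^ 3" using \<kappa>_ge(1) by simp
    then show ?thesis
      using has_pgrad_grad[OF n k l] has_pgrad_lipschitz[OF n k l]
      unfolding Let_def Cphi lip_growth_def[symmetric] by blast
  qed
  done

end
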